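(* Assume $r>\mu$. For every $p>0$, $J(p)=\widetilde{J}(p)$, where \[ \widetilde{J}(p):=\sup_{\tau_I\le\tau_O}\mathbb{E}^p\left[\int_{\tau_I}^{\tau_O}e^{-rt}(P(t)-C)\,\mathrm{d}t-e^{-r\tau_I}(k_1P(\tau_I)+k_0)-e^{-r\tau_O}(l_1P(\tau_O)+l_0)\right] \] with \[ k_1:=\frac{e^{(\mu-r)\delta}-1}{\mu-r},\quad k_0:=\frac{C}{r}(e^{-r\delta}-1)+e^{-r\delta}K_I,\quad l_1:=-\frac{e^{(\mu-r)\delta}-1}{\mu-r},\quad l_0:=-\frac{C}{r}(e^{-r\delta}-1)+e^{-r\delta}K_O; \] moreover, any pair $(\tau_I^*,\tau_O^* )$ of stopping times with $\tau_I^*\le\tau_O^*$ maximizing the problem defining $\widetilde{J}$ also maximizes the problem defining $J$.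
   Context: Let $(\Omega,\mathscr{F},\{\mathscr{F}_t\}_{t\ge0},\mathbb{P})$ be a filtered probability space satisfying the usual conditions with $\mathscr{F}_0$ the completion of $\{\emptyset,\Omega\}$, carrying a one-dimensional standard Brownian motion $B$. For constants $\mu\in\mathbb{R}$, $\sigma>0$, $p>0$, the price process $P$ solves $\mathrm{d}P(t)=\mu P(t)\,\mathrm{d}t+\sigma P(t)\,\mathrm{d}B(t)$, $P(0)=p$. $\mathbb{E}^p$ denotes expectation given $P(0)=p$. Stopping times take values in $[0,+\infty]$, and terms of the form $\exp(-r\tau)(\cdots)$ are $0$ on $\{\tau=+\infty\}$. Constants: discount rate $r>0$, running cost $C\in\mathbb{R}$, entry cost $K_I\in\mathbb{R}$, exit cost $K_O\in\mathbb{R}$, delay $\delta\ge0$. Define \[ J(p):=\sup_{\tau_I\le\tau_O}\mathbb{E}^p\left[\int_{\tau_I+\delta}^{\tau_O+\delta}e^{-rt}(P(t)-C)\,\mathrm{d}t-e^{-r(\tau_I+\delta)}K_I-e^{-r(\tau_O+\delta)}K_O\right], \] the supremum over stopping times $\tau_I\le\tau_O$. *)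

theory Defs
  imports "HOL-Probability.Probability"
begin

definition usual_filtration :: "'a measure \<Rightarrow> (real \<Rightarrow> 'a measure) \<Rightarrow> bool" where
  "usual_filtration M F \<longleftrightarrow>
     \<comment> \<open>a filtration of sub-sigma-algebras of M, indexed by t \<ge> 0\<close>
     (\<forall>t\<ge>0. space (F t) = space M \<and> sets (F t) \<subseteq> sets M) \<and>
     (\<forall>s t. 0 \<le> s \<longrightarrow> s \<le> t \<longrightarrow> sets (F s) \<subseteq> sets (F t)) \<and>
     \<comment> \<open>right-continuity\<close>
     (\<forall>t\<ge>0. sets (F t) = (\<Inter>u\<in>{t<..}. sets (F u))) \<and>
     \<comment> \<open>completeness of the underlying space\<close>
     (\<forall>A\<in>sets M. emeasure M A = 0 \<longrightarrow> (\<forall>N. N \<subseteq> A \<longrightarrow> N \<in> sets M)) \<and>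
     \<comment> \<open>F_0 is the completion of the trivial sigma-algebra (contains all null sets)\<close>
     sets (F 0) = {A \<in> sets M. emeasure M A = 0 \<or> emeasure M (space M - A) = 0}"

definition std_brownian_motion ::
    "'a measure \<Rightarrow> (real \<Rightarrow> 'a measure) \<Rightarrow> (real \<Rightarrow> 'a \<Rightarrow> real) \<Rightarrow> bool" where
  "std_brownian_motion M F B \<longleftrightarrow>
     (\<forall>\<omega>\<in>space M. B 0 \<omega> = 0) \<and>
     (\<forall>\<omega>\<in>space M. continuous_on {0..} (\<lambda>t. B t \<omega>)) \<and>
     (\<forall>t\<ge>0. B t \<in> borel_measurable (F t)) \<and>
     (\<forall>s t. 0 \<le> s \<longrightarrow> s < t \<longrightarrow>
        distributed M lborel (\<lambda>\<omega>. B t \<omega> - B s \<omega>) (normal_density 0 (sqrt (t - s))) \<and>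
        prob_space.indep_set M (sets (F s))
          {(\<lambda>\<omega>. B t \<omega> - B s \<omega>) -` U \<inter> space M | U. U \<in> sets borel})"

text \<open>Unique strong solution of dP = mu P dt + sigma P dB, P(0) = p.\<close>
definition gbm :: "real \<Rightarrow> real \<Rightarrow> real \<Rightarrow> (real \<Rightarrow> 'a \<Rightarrow> real) \<Rightarrow> real \<Rightarrow> 'a \<Rightarrow> real" where
  "gbm \<mu> \<sigma> p B t \<omega> = p * exp ((\<mu> - \<sigma>\<^sup>2 / 2) * t + \<sigma> * B t \<omega>)"

definition stopping_time_inf :: "'a measure \<Rightarrow> (real \<Rightarrow> 'a measure) \<Rightarrow> ('a \<Rightarrow> ereal) \<Rightarrow> bool" where
  "stopping_time_inf M F \<tau> \<longleftrightarrow>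
     (\<forall>\<omega>\<in>space M. 0 \<le> \<tau> \<omega>) \<and>
     (\<forall>t\<ge>0. {\<omega>\<in>space M. \<tau> \<omega> \<le> ereal t} \<in> sets (F t))"

definition admissible :: "'a measure \<Rightarrow> (real \<Rightarrow> 'a measure) \<Rightarrow> ('a \<Rightarrow> ereal) \<Rightarrow> ('a \<Rightarrow> ereal) \<Rightarrow> bool" where
  "admissible M F \<tau>I \<tau>O \<longleftrightarrow>
     stopping_time_inf M F \<tau>I \<and> stopping_time_inf M F \<tau>O \<and> (\<forall>\<omega>\<in>space M. \<tau>I \<omega> \<le> \<tau>O \<omega>)"

definition disc_at :: "real \<Rightarrow> (real \<Rightarrow> real) \<Rightarrow> ereal \<Rightarrow> real" where
  "disc_at r f \<tau> = (case \<tau> of ereal x \<Rightarrow> exp (- r * x) * f x | _ \<Rightarrow> 0)"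

definition run_int :: "real \<Rightarrow> real \<Rightarrow> (real \<Rightarrow> real) \<Rightarrow> ereal \<Rightarrow> ereal \<Rightarrow> real" where
  "run_int r C P a b = (LINT t:{t. a \<le> ereal t \<and> ereal t < b}|lborel. exp (- r * t) * (P t - C))"

definition reward_J ::
    "real \<Rightarrow> real \<Rightarrow> real \<Rightarrow> real \<Rightarrow> real \<Rightarrow> real \<Rightarrow> real \<Rightarrow> real \<Rightarrow> (real \<Rightarrow> 'a \<Rightarrow> real)
     \<Rightarrow> ('a \<Rightarrow> ereal) \<Rightarrow> ('a \<Rightarrow> ereal) \<Rightarrow> 'a \<Rightarrow> real" where
  "reward_J \<mu> \<sigma> r C KI KO \<delta> p B \<tau>I \<tau>O \<omega> =
     run_int r C (\<lambda>t. gbm \<mu> \<sigma> p B t \<omega>) (\<tau>I \<omega> + ereal \<delta>) (\<tau>O \<omega> + ereal \<delta>)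
     - disc_at r (\<lambda>_. KI) (\<tau>I \<omega> + ereal \<delta>)
     - disc_at r (\<lambda>_. KO) (\<tau>O \<omega> + ereal \<delta>)"

definition J_val ::
    "'a measure \<Rightarrow> (real \<Rightarrow> 'a measure) \<Rightarrow> (real \<Rightarrow> 'a \<Rightarrow> real) \<Rightarrow>
     real \<Rightarrow> real \<Rightarrow> real \<Rightarrow> real \<Rightarrow> real \<Rightarrow> real \<Rightarrow> real \<Rightarrow> real \<Rightarrow> ereal" where
  "J_val M F B \<mu> \<sigma> r C KI KO \<delta> p =
     (SUP \<tau>\<in>{(\<tau>I, \<tau>O). admissible M F \<tau>I \<tau>O}.
        ereal (integral\<^sup>L M (reward_J \<mu> \<sigma> r C KI KO \<delta> p B (fst \<tau>) (snd \<tau>))))"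

definition k1 :: "real \<Rightarrow> real \<Rightarrow> real \<Rightarrow> real" where
  "k1 \<mu> r \<delta> = (exp ((\<mu> - r) * \<delta>) - 1) / (\<mu> - r)"
definition k0 :: "real \<Rightarrow> real \<Rightarrow> real \<Rightarrow> real \<Rightarrow> real" where
  "k0 r C KI \<delta> = C / r * (exp (- r * \<delta>) - 1) + exp (- r * \<delta>) * KI"
definition l1 :: "real \<Rightarrow> real \<Rightarrow> real \<Rightarrow> real" where
  "l1 \<mu> r \<delta> = - (exp ((\<mu> - r) * \<delta>) - 1) / (\<mu> - r)"
definition l0 :: "real \<Rightarrow> real \<Rightarrow> real \<Rightarrow> real \<Rightarrow> real" where
  "l0 r C KO \<delta> = - (C / r) * (exp (- r * \<delta>) - 1) + exp (- r * \<delta>) * KO"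

definition reward_Jt ::
    "real \<Rightarrow> real \<Rightarrow> real \<Rightarrow> real \<Rightarrow> real \<Rightarrow> real \<Rightarrow> real \<Rightarrow> real \<Rightarrow> (real \<Rightarrow> 'a \<Rightarrow> real)
     \<Rightarrow> ('a \<Rightarrow> ereal) \<Rightarrow> ('a \<Rightarrow> ereal) \<Rightarrow> 'a \<Rightarrow> real" where
  "reward_Jt \<mu> \<sigma> r C KI KO \<delta> p B \<tau>I \<tau>O \<omega> =
     run_int r C (\<lambda>t. gbm \<mu> \<sigma> p B t \<omega>) (\<tau>I \<omega>) (\<tau>O \<omega>)
     - disc_at r (\<lambda>t. k1 \<mu> r \<delta> * gbm \<mu> \<sigma> p B t \<omega> + k0 r C KI \<delta>) (\<tau>I \<omega>)
     - disc_at r (\<lambda>t. l1 \<mu> r \<delta> * gbm \<mu> \<sigma> p B t \<omega> + l0 r C KO \<delta>) (\<tau>O \<omega>)"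

definition Jt_val ::
    "'a measure \<Rightarrow> (real \<Rightarrow> 'a measure) \<Rightarrow> (real \<Rightarrow> 'a \<Rightarrow> real) \<Rightarrow>
     real \<Rightarrow> real \<Rightarrow> real \<Rightarrow> real \<Rightarrow> real \<Rightarrow> real \<Rightarrow> real \<Rightarrow> real \<Rightarrow> ereal" where
  "Jt_val M F B \<mu> \<sigma> r C KI KO \<delta> p =
     (SUP \<tau>\<in>{(\<tau>I, \<tau>O). admissible M F \<tau>I \<tau>O}.
        ereal (integral\<^sup>L M (reward_Jt \<mu> \<sigma> r C KI KO \<delta> p B (fst \<tau>) (snd \<tau>))))"

end

theory Submission
  imports Defs "HOL-Real_Asymp.Real_Asymp"
begin

text \<open>
  Pathwise, the delayed reward differs from the undelayed one only on the windows
  \<open>[\<tau>I, \<tau>I + \<delta>)\<close> and \<open>[\<tau>O, \<tau>O + \<delta>)\<close>. There the running cost and the fixed cost are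
  deterministic up to the factor \<open>exp (-r \<tau>)\<close>, which is how \<open>k0\<close> and \<open>l0\<close> arise, and the price
  income \<open>W \<tau> = \<integral>[\<tau>, \<tau> + \<delta>) exp (-r t) P t dt\<close> is replaced by \<open>k1 exp (-r \<tau>) P \<tau>\<close>. So the two
  rewards differ by \<open>(W \<tau>O - k1 exp (-r \<tau>O) P \<tau>O) - (W \<tau>I - k1 exp (-r \<tau>I) P \<tau>I)\<close>, and it
  remains to show \<open>E (W \<tau>) = k1 E (exp (-r \<tau>) P \<tau>)\<close> for every stopping time. By Fubini this
  follows from \<open>E (exp (-r (\<tau> + s)) P (\<tau> + s)) = exp ((\<mu> - r) s) E (exp (-r \<tau>) P \<tau>)\<close>, which is
  optional stopping for the exponential martingale \<open>exp (\<sigma> B t - \<sigma>\<^sup>2 t / 2)\<close> weighted by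
  \<open>exp ((\<mu> - r) \<tau>) \<le> 1\<close>. Optional stopping is proved for finitely valued stopping times from
  the independence of increments, extended to bounded ones by dyadic approximation from
  above (an \<open>L\<^sup>2\<close> bound gives uniform integrability) and to arbitrary ones by monotone
  convergence. The condition \<open>r > \<mu>\<close> makes \<open>\<integral>[0, \<infinity>) exp (-r t) P t dt\<close> integrable, so all
  these rewards are integrable.
\<close>

section \<open>Dyadic approximation\<close>

lemma dyadic_floor_tendsto: "(\<lambda>n::nat. real_of_int \<lfloor>2^n * t\<rfloor> / 2^n) \<longlonglongrightarrow> t"
proof (rule tendsto_sandwich)
  have "(\<lambda>n::nat. t - (1/2)^n) \<longlonglongrightarrow> t - 0"
    by (intro tendsto_diff tendsto_const LIMSEQ_realpow_zero) auto
  then show "(\<lambda>n::nat. t - (1/2)^n) \<longlonglongrightarrow> t" by simp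
  show "(\<lambda>n::nat. t) \<longlonglongrightarrow> t" by simp
  show "\<forall>\<^sub>F n in sequentially. t - (1/2)^n \<le> real_of_int \<lfloor>2^n * t\<rfloor> / 2^n"
  proof (rule always_eventually, rule allI)
    fix n :: nat
    have "2^n * t - 1 \<le> real_of_int \<lfloor>2^n * t\<rfloor>" by linarith
    then have "(2^n * t - 1) / 2^n \<le> real_of_int \<lfloor>2^n * t\<rfloor> / 2^n" by (simp add: divide_right_mono)
    moreover have "(2^n * t - 1) / 2^n = t - (1/2)^n" by (simp add: field_simps power_one_over)
    ultimately show "t - (1/2)^n \<le> real_of_int \<lfloor>2^n * t\<rfloor> / 2^n" by simp
  qed
  show "\<forall>\<^sub>F n in sequentially. real_of_int \<lfloor>2^n * t\<rfloor> / 2^n \<le> t"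
  proof (rule always_eventually, rule allI)
    fix n :: nat
    have "real_of_int \<lfloor>2^n * t\<rfloor> \<le> 2^n * t" by linarith
    then show "real_of_int \<lfloor>2^n * t\<rfloor> / 2^n \<le> t" by (simp add: field_simps)
  qed
qed

lemma dyadic_ceiling_tendsto: "(\<lambda>n::nat. real_of_int \<lceil>2^n * t\<rceil> / 2^n) \<longlonglongrightarrow> t"
proof -
  have "(\<lambda>n::nat. - (real_of_int \<lfloor>2^n * (-t)\<rfloor> / 2^n)) \<longlonglongrightarrow> - (-t)"
    by (intro tendsto_minus dyadic_floor_tendsto)
  moreover have "- (real_of_int \<lfloor>2^n * (-t)\<rfloor> / 2^n) = real_of_int \<lceil>2^n * t\<rceil> / 2^n" for n :: nat
    by (simp add: ceiling_def)
  ultimately show ?thesis by simp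
qed

lemma le_dyadic_ceiling: "t \<le> real_of_int \<lceil>2^n * t\<rceil> / 2^n"
proof -
  have "2^n * t \<le> real_of_int \<lceil>2^n * t\<rceil>" by linarith
  then show ?thesis by (simp add: field_simps)
qed

lemma dyadic_ceiling_le_iff:
  "real_of_int \<lceil>2^n * x\<rceil> / 2^n \<le> t \<longleftrightarrow> x \<le> real_of_int \<lfloor>2^n * t\<rfloor> / 2^n"
proof -
  have p: "(0::real) < 2^n" by simp
  have "real_of_int \<lceil>2^n * x\<rceil> / 2^n \<le> t \<longleftrightarrow> real_of_int \<lceil>2^n * x\<rceil> \<le> 2^n * t"
    using p by (simp add: divide_le_eq mult.commute)
  also have "\<dots> \<longleftrightarrow> \<lceil>2^n * x\<rceil> \<le> \<lfloor>2^n * t\<rfloor>" by (simp add: le_floor_iff)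
  also have "\<dots> \<longleftrightarrow> 2^n * x \<le> real_of_int \<lfloor>2^n * t\<rfloor>" by (simp add: ceiling_le_iff)
  also have "\<dots> \<longleftrightarrow> x \<le> real_of_int \<lfloor>2^n * t\<rfloor> / 2^n"
    using p by (simp add: le_divide_eq mult.commute)
  finally show ?thesis .
qed

definition dyadic_up :: "nat \<Rightarrow> ereal \<Rightarrow> ereal" where
  "dyadic_up n e = (if e = \<infinity> then \<infinity> else ereal (real_of_int \<lceil>2^n * real_of_ereal e\<rceil> / 2^n))"

definition dyadic_grid :: "nat \<Rightarrow> real \<Rightarrow> real set" where
  "dyadic_grid n N = (\<lambda>k::nat. real k / 2^n) ` {..nat \<lceil>2^n * N\<rceil>}"

lemma dyadic_up_eq_infinity_iff[simp]: "dyadic_up n e = \<infinity> \<longleftrightarrow> e = \<infinity>"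
  by (simp add: dyadic_up_def)

lemma dyadic_up_nonneg:
  assumes "0 \<le> e" shows "0 \<le> dyadic_up n e"
proof -
  have "0 \<le> real_of_ereal e" using assms by (simp add: real_of_ereal_pos)
  then have "0 \<le> real_of_int \<lceil>2^n * real_of_ereal e\<rceil> / 2^n"
    using le_dyadic_ceiling[of "real_of_ereal e" n] by linarith
  then show ?thesis by (simp add: dyadic_up_def)
qed

lemma dyadic_up_le_iff:
  assumes "0 \<le> e"
  shows "dyadic_up n e \<le> ereal t \<longleftrightarrow> e \<le> ereal (real_of_int \<lfloor>2^n * t\<rfloor> / 2^n)"
proof (cases e)
  case (real x)
  have "dyadic_up n e = ereal (real_of_int \<lceil>2^n * x\<rceil> / 2^n)" by (simp add: dyadic_up_def real)
  then show ?thesis using dyadic_ceiling_le_iff[of n x t] real by simp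
qed (use assms in \<open>simp_all add: dyadic_up_def\<close>)

lemma dyadic_grid_finite: "finite (dyadic_grid n N)"
  by (simp add: dyadic_grid_def)

lemma dyadic_grid_nonneg: "dyadic_grid n N \<subseteq> {0..}"
  by (auto simp: dyadic_grid_def)

lemma dyadic_grid_le:
  assumes "0 \<le> N" "d \<in> dyadic_grid n N" shows "d \<le> N + 1"
proof -
  obtain k :: nat where k: "k \<le> nat \<lceil>2^n * N\<rceil>" "d = real k / 2^n"
    using assms by (auto simp: dyadic_grid_def)
  have "0 \<le> 2^n * N" using assms(1) by simp
  then have "int k \<le> \<lceil>2^n * N\<rceil>" using k(1) by linarith
  then have "real k \<le> real_of_int \<lceil>2^n * N\<rceil>" by (metis of_int_le_iff of_int_of_nat_eq)
  also have "\<dots> \<le> 2^n * N + 1" by linarith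
  finally have "d \<le> N + 1 / 2^n"
    using k(2) by (simp add: field_simps)
  also have "\<dots> \<le> N + 1" by simp
  finally show ?thesis .
qed

lemma dyadic_up_in_grid:
  assumes "0 \<le> e" "e \<le> ereal N" "e \<noteq> \<infinity>"
  shows "dyadic_up n e \<in> ereal ` dyadic_grid n N"
proof -
  obtain x where x: "e = ereal x" "0 \<le> x" "x \<le> N" using assms by (cases e) auto
  then have "0 \<le> 2^n * x" "2^n * x \<le> 2^n * N" by simp_all
  then have "0 \<le> \<lceil>2^n * x\<rceil>" "\<lceil>2^n * x\<rceil> \<le> \<lceil>2^n * N\<rceil>"
    by (simp_all add: ceiling_mono)
  then have k: "nat \<lceil>2^n * x\<rceil> \<le> nat \<lceil>2^n * N\<rceil>"
    and eq: "real_of_int \<lceil>2^n * x\<rceil> / 2^n = real (nat \<lceil>2^n * x\<rceil>) / 2^n"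
    by (metis nat_mono, simp)
  have "real_of_int \<lceil>2^n * x\<rceil> / 2^n \<in> dyadic_grid n N"
    unfolding dyadic_grid_def by (rule rev_image_eqI[where f = "\<lambda>k. real k / 2^n", OF atMost_iff[THEN iffD2, OF k] eq])
  then show ?thesis using x by (simp add: dyadic_up_def)
qed

lemma dyadic_up_tendsto:
  "e \<noteq> \<infinity> \<Longrightarrow> (\<lambda>n. real_of_ereal (dyadic_up n e)) \<longlonglongrightarrow> real_of_ereal e"
  unfolding dyadic_up_def using dyadic_ceiling_tendsto[of "real_of_ereal e"] by simp

lemma le_min_plus_square_div:
  fixes x c :: real
  assumes "0 < c" "0 \<le> x"
  shows "x \<le> min x c + x\<^sup>2 / c"
proof (cases "x \<le> c")
  case False
  then have "c * x \<le> x * x" using assms by (intro mult_right_mono) auto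
  then have "c * x \<le> x\<^sup>2" by (simp add: power2_eq_square)
  then have "x \<le> x\<^sup>2 / c" using assms by (simp add: field_simps)
  moreover have "min x c = c" using False by simp
  ultimately show ?thesis using assms by linarith
qed (use assms in simp)

lemma nn_integral_le_truncation_plus_L2:
  fixes f :: "'a \<Rightarrow> real"
  assumes f: "f \<in> borel_measurable M" and nn: "\<And>x. 0 \<le> f x" and c: "0 < c"
    and K: "(\<integral>\<^sup>+x. ennreal ((f x)\<^sup>2) \<partial>M) \<le> ennreal K"
  shows "(\<integral>\<^sup>+x. ennreal (f x) \<partial>M) \<le> (\<integral>\<^sup>+x. ennreal (min (f x) c) \<partial>M) + ennreal (K / c)"
proof -
  have "(\<integral>\<^sup>+x. ennreal (f x) \<partial>M) \<le> (\<integral>\<^sup>+x. ennreal (min (f x) c) + ennreal ((f x)\<^sup>2 / c) \<partial>M)"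
    using le_min_plus_square_div[OF c nn] nn c
    by (intro nn_integral_mono) (simp add: ennreal_plus[symmetric] del: ennreal_plus)
  also have "\<dots> = (\<integral>\<^sup>+x. ennreal (min (f x) c) \<partial>M) + (\<integral>\<^sup>+x. ennreal ((f x)\<^sup>2) * ennreal (1/c) \<partial>M)"
    using f c by (subst nn_integral_add[symmetric]) (auto intro!: nn_integral_cong simp: ennreal_mult''[symmetric])
  also have "\<dots> = (\<integral>\<^sup>+x. ennreal (min (f x) c) \<partial>M) + (\<integral>\<^sup>+x. ennreal ((f x)\<^sup>2) \<partial>M) * ennreal (1/c)"
    using f by (subst nn_integral_multc) auto
  also have "\<dots> \<le> (\<integral>\<^sup>+x. ennreal (min (f x) c) \<partial>M) + ennreal K * ennreal (1/c)"
    by (intro add_left_mono mult_right_mono K) simp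
  also have "\<dots> = (\<integral>\<^sup>+x. ennreal (min (f x) c) \<partial>M) + ennreal (K / c)"
    using c by (simp add: ennreal_mult''[symmetric])
  finally show ?thesis .
qed

lemma (in prob_space) nn_integral_tendsto_if_L2_bounded:
  fixes f :: "nat \<Rightarrow> 'a \<Rightarrow> real" and g :: "'a \<Rightarrow> real"
  assumes fm: "\<And>k. f k \<in> borel_measurable M" and gm: "g \<in> borel_measurable M"
    and nn: "\<And>k x. 0 \<le> f k x"
    and lim: "\<And>x. x \<in> space M \<Longrightarrow> (\<lambda>k. f k x) \<longlonglongrightarrow> g x"
    and K: "0 \<le> K" and bnd: "\<And>k. (\<integral>\<^sup>+x. ennreal ((f k x)\<^sup>2) \<partial>M) \<le> ennreal K"
  shows "(\<lambda>k. \<integral>\<^sup>+x. ennreal (f k x) \<partial>M) \<longlonglongrightarrow> (\<integral>\<^sup>+x. ennreal (g x) \<partial>M)"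
proof -
  have lower: "(\<integral>\<^sup>+x. ennreal (g x) \<partial>M) \<le> liminf (\<lambda>k. \<integral>\<^sup>+x. ennreal (f k x) \<partial>M)"
  proof -
    have "(\<integral>\<^sup>+x. ennreal (g x) \<partial>M) = (\<integral>\<^sup>+x. liminf (\<lambda>k. ennreal (f k x)) \<partial>M)"
    proof (rule nn_integral_cong)
      fix x assume "x \<in> space M"
      then have "(\<lambda>k. ennreal (f k x)) \<longlonglongrightarrow> ennreal (g x)" by (intro tendsto_ennrealI lim)
      then show "ennreal (g x) = liminf (\<lambda>k. ennreal (f k x))" by (simp add: lim_imp_Liminf)
    qed
    also have "\<dots> \<le> liminf (\<lambda>k. \<integral>\<^sup>+x. ennreal (f k x) \<partial>M)"
      by (rule nn_integral_liminf) (use fm in measurable)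
    finally show ?thesis .
  qed
  have truncated: "limsup (\<lambda>k. \<integral>\<^sup>+x. ennreal (f k x) \<partial>M) \<le> (\<integral>\<^sup>+x. ennreal (g x) \<partial>M) + ennreal (K / c)"
    if c: "0 < c" for c
  proof -
    have split: "(\<integral>\<^sup>+x. ennreal (f k x) \<partial>M) \<le> (\<integral>\<^sup>+x. ennreal (min (f k x) c) \<partial>M) + ennreal (K / c)" for k
      using nn_integral_le_truncation_plus_L2[OF fm nn c bnd] .
    have conv: "(\<lambda>k. \<integral>\<^sup>+x. ennreal (min (f k x) c) \<partial>M) \<longlonglongrightarrow> (\<integral>\<^sup>+x. ennreal (min (g x) c) \<partial>M)"
    proof (rule nn_integral_dominated_convergence[where w="\<lambda>_. ennreal c"])
      show "(\<lambda>x. ennreal (min (f i x) c)) \<in> borel_measurable M" for i using fm by measurable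
      show "(\<lambda>x. ennreal (min (g x) c)) \<in> borel_measurable M" using gm by measurable
      show "(\<lambda>_. ennreal c) \<in> borel_measurable M" by simp
      show "AE x in M. ennreal (min (f j x) c) \<le> ennreal c" for j by (simp add: ennreal_leI)
      show "integral\<^sup>N M (\<lambda>_. ennreal c) < \<infinity>" by (simp add: emeasure_space_1)
      show "AE x in M. (\<lambda>i. ennreal (min (f i x) c)) \<longlonglongrightarrow> ennreal (min (g x) c)"
        by (rule AE_I2) (intro tendsto_ennrealI tendsto_min tendsto_const lim)
    qed
    have "limsup (\<lambda>k. \<integral>\<^sup>+x. ennreal (f k x) \<partial>M) \<le> limsup (\<lambda>k. (\<integral>\<^sup>+x. ennreal (min (f k x) c) \<partial>M) + ennreal (K / c))"
      by (intro Limsup_mono always_eventually allI split)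
    also have "\<dots> = (\<integral>\<^sup>+x. ennreal (min (g x) c) \<partial>M) + ennreal (K / c)"
      by (intro lim_imp_Limsup tendsto_add conv tendsto_const) simp
    also have "\<dots> \<le> (\<integral>\<^sup>+x. ennreal (g x) \<partial>M) + ennreal (K / c)"
      by (intro add_right_mono nn_integral_mono ennreal_leI) simp
    finally show ?thesis .
  qed
  have upper: "limsup (\<lambda>k. \<integral>\<^sup>+x. ennreal (f k x) \<partial>M) \<le> (\<integral>\<^sup>+x. ennreal (g x) \<partial>M)"
  proof (rule ennreal_le_epsilon)
    fix e :: real assume e: "0 < e"
    define c where "c = (K + 1) / e"
    have c: "0 < c" using e K by (simp add: c_def)
    have "K / c \<le> e" using e K by (simp add: c_def field_simps)
    then have "(\<integral>\<^sup>+x. ennreal (g x) \<partial>M) + ennreal (K / c) \<le> (\<integral>\<^sup>+x. ennreal (g x) \<partial>M) + ennreal e"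
      by (intro add_left_mono ennreal_leI)
    with truncated[OF c] show "limsup (\<lambda>k. \<integral>\<^sup>+x. ennreal (f k x) \<partial>M) \<le> (\<integral>\<^sup>+x. ennreal (g x) \<partial>M) + ennreal e"
      by (rule order_trans)
  qed
  have "liminf (\<lambda>k. \<integral>\<^sup>+x. ennreal (f k x) \<partial>M) \<le> limsup (\<lambda>k. \<integral>\<^sup>+x. ennreal (f k x) \<partial>M)"
    by (rule Liminf_le_Limsup) simp
  then show ?thesis
    using lower upper by (intro Liminf_eq_Limsup) (auto intro: antisym order_trans)
qed

lemma integral_eq_if_AE_eq_add_centered:
  fixes f g w :: "'a \<Rightarrow> real"
  assumes f: "f \<in> borel_measurable M" and g: "g \<in> borel_measurable M"
    and w: "integrable M w" "integral\<^sup>L M w = 0"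
    and eq: "AE x in M. f x = g x + w x"
  shows "integral\<^sup>L M f = integral\<^sup>L M g"
proof (cases "integrable M g")
  case True
  then have "integrable M f"
    using eq w by (intro integrable_cong_AE_imp[OF _ f, of "\<lambda>x. g x + w x"]) (auto elim: AE_mp)
  have "integral\<^sup>L M f = integral\<^sup>L M (\<lambda>x. g x + w x)"
    using f g w eq by (intro integral_cong_AE) auto
  also have "\<dots> = integral\<^sup>L M g" using True w by simp
  finally show ?thesis .
next
  case False
  have "\<not> integrable M f"
  proof
    assume "integrable M f"
    then have "integrable M (\<lambda>x. f x - w x)" using w by simp
    from this g have "integrable M g"
      by (rule integrable_cong_AE_imp) (use eq in \<open>auto elim: AE_mp\<close>)
    with False show False ..
  qed
  with False show ?thesis by (simp add: not_integrable_integral_eq)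
qed

lemma measurable_pair_compose_borel:
  assumes f: "(\<lambda>(\<omega>, t). f \<omega> t) \<in> borel_measurable (M \<Otimes>\<^sub>M lborel)" and u: "u \<in> borel_measurable M"
  shows "(\<lambda>\<omega>. f \<omega> (u \<omega>)) \<in> borel_measurable M"
  using measurable_Pair_compose_split[OF f measurable_ident_sets[OF refl]] u
    measurable_cong_sets[OF refl sets_lborel]
  by auto

lemma stopping_time_nonneg: "stopping_time_inf M F \<tau> \<Longrightarrow> \<omega> \<in> space M \<Longrightarrow> 0 \<le> \<tau> \<omega>"
  unfolding stopping_time_inf_def by blast

lemma stopping_time_real_nonneg:
  "stopping_time_inf M F \<tau> \<Longrightarrow> \<omega> \<in> space M \<Longrightarrow> 0 \<le> real_of_ereal (\<tau> \<omega>)"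
  by (simp add: stopping_time_nonneg real_of_ereal_pos)

lemma stopping_time_le_sets:
  "stopping_time_inf M F \<tau> \<Longrightarrow> 0 \<le> t \<Longrightarrow> {\<omega>\<in>space M. \<tau> \<omega> \<le> ereal t} \<in> sets (F t)"
  unfolding stopping_time_inf_def by blast

lemma if_infinity_eq_sum_level:
  fixes q :: "real \<Rightarrow> 'b::comm_monoid_add"
  assumes "finite D" "e = \<infinity> \<or> e \<in> ereal ` D"
  shows "(if e = \<infinity> then 0 else q (real_of_ereal e)) = (\<Sum>d\<in>D. if e = ereal d then q d else 0)"
  using assms by (auto simp: sum.delta')

lemma nn_integral_finite_range_eq_sum:
  fixes q :: "real \<Rightarrow> 'a \<Rightarrow> ennreal"
  assumes D: "finite D" and vals: "\<forall>\<omega>\<in>space M. \<tau> \<omega> = \<infinity> \<or> \<tau> \<omega> \<in> ereal ` D"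
    and S: "\<And>d. d \<in> D \<Longrightarrow> {\<omega>\<in>space M. \<tau> \<omega> = ereal d} \<in> sets M"
    and q: "\<And>d. d \<in> D \<Longrightarrow> q d \<in> borel_measurable M"
  shows "(\<integral>\<^sup>+\<omega>. (if \<tau> \<omega> = \<infinity> then 0 else q (real_of_ereal (\<tau> \<omega>)) \<omega>) \<partial>M)
    = (\<Sum>d\<in>D. \<integral>\<^sup>+\<omega>. indicator {\<omega>\<in>space M. \<tau> \<omega> = ereal d} \<omega> * q d \<omega> \<partial>M)"
proof -
  have "(\<integral>\<^sup>+\<omega>. (if \<tau> \<omega> = \<infinity> then 0 else q (real_of_ereal (\<tau> \<omega>)) \<omega>) \<partial>M)
      = (\<integral>\<^sup>+\<omega>. (\<Sum>d\<in>D. indicator {\<omega>\<in>space M. \<tau> \<omega> = ereal d} \<omega> * q d \<omega>) \<partial>M)"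
  proof (rule nn_integral_cong)
    fix \<omega> assume \<omega>: "\<omega> \<in> space M"
    have "(if \<tau> \<omega> = \<infinity> then 0 else q (real_of_ereal (\<tau> \<omega>)) \<omega>)
        = (\<Sum>d\<in>D. if \<tau> \<omega> = ereal d then q d \<omega> else 0)"
      using vals \<omega> D by (intro if_infinity_eq_sum_level[where q = "\<lambda>d. q d \<omega>"]) auto
    also have "\<dots> = (\<Sum>d\<in>D. indicator {\<omega>\<in>space M. \<tau> \<omega> = ereal d} \<omega> * q d \<omega>)"
      using \<omega> by (intro sum.cong) auto
    finally show "(if \<tau> \<omega> = \<infinity> then 0 else q (real_of_ereal (\<tau> \<omega>)) \<omega>)
        = (\<Sum>d\<in>D. indicator {\<omega>\<in>space M. \<tau> \<omega> = ereal d} \<omega> * q d \<omega>)" .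
  qed
  also have "\<dots> = (\<Sum>d\<in>D. \<integral>\<^sup>+\<omega>. indicator {\<omega>\<in>space M. \<tau> \<omega> = ereal d} \<omega> * q d \<omega> \<partial>M)"
    using S q by (intro nn_integral_sum) auto
  finally show ?thesis .
qed

section \<open>Optional stopping for the exponential martingale\<close>

locale brownian_filtration = prob_space M for M :: "'a measure" +
  fixes F :: "real \<Rightarrow> 'a measure" and B :: "real \<Rightarrow> 'a \<Rightarrow> real"
  assumes filtration: "usual_filtration M F" and brownian: "std_brownian_motion M F B"
begin

lemma space_filtration: "0 \<le> t \<Longrightarrow> space (F t) = space M"
  using filtration[unfolded usual_filtration_def, THEN conjunct1] by blast

lemma sets_filtration_subset: "0 \<le> t \<Longrightarrow> sets (F t) \<subseteq> sets M"
  using filtration[unfolded usual_filtration_def, THEN conjunct1] by blast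

lemma sets_filtration_mono: "0 \<le> s \<Longrightarrow> s \<le> t \<Longrightarrow> sets (F s) \<subseteq> sets (F t)"
  using filtration[unfolded usual_filtration_def, THEN conjunct2, THEN conjunct1] by blast

lemma measurable_from_filtration: "0 \<le> t \<Longrightarrow> f \<in> measurable (F t) N \<Longrightarrow> f \<in> measurable M N"
  using measurable_from_subalg space_filtration sets_filtration_subset
  unfolding subalgebra_def by blast

lemma B_measurable_filtration: "0 \<le> t \<Longrightarrow> B t \<in> borel_measurable (F t)"
  using brownian[unfolded std_brownian_motion_def, THEN conjunct2, THEN conjunct2, THEN conjunct1]
  by blast

lemma B_measurable[measurable]: "0 \<le> t \<Longrightarrow> B t \<in> borel_measurable M"
  using measurable_from_filtration B_measurable_filtration by blast

lemma B_zero: "\<omega> \<in> space M \<Longrightarrow> B 0 \<omega> = 0"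
  using brownian[unfolded std_brownian_motion_def, THEN conjunct1] by blast

lemma continuous_on_B: "\<omega> \<in> space M \<Longrightarrow> continuous_on {0..} (\<lambda>t. B t \<omega>)"
  using brownian[unfolded std_brownian_motion_def, THEN conjunct2, THEN conjunct1] by blast

lemma B_increment_distributed: "0 \<le> s \<Longrightarrow> s < t \<Longrightarrow>
  distributed M lborel (\<lambda>\<omega>. B t \<omega> - B s \<omega>) (\<lambda>x. ennreal (normal_density 0 (sqrt (t - s)) x))"
  using brownian[unfolded std_brownian_motion_def, THEN conjunct2, THEN conjunct2, THEN conjunct2]
  by blast

lemma B_increment_indep: "0 \<le> s \<Longrightarrow> s < t \<Longrightarrow>
  indep_set (sets (F s)) {(\<lambda>\<omega>. B t \<omega> - B s \<omega>) -` U \<inter> space M |U. U \<in> sets borel}"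
  using brownian[unfolded std_brownian_motion_def, THEN conjunct2, THEN conjunct2, THEN conjunct2]
  by blast

lemma nn_integral_exp_B_increment:
  assumes "0 \<le> t" "0 < h"
  shows "(\<integral>\<^sup>+\<omega>. ennreal (exp (a * (B (t+h) \<omega> - B t \<omega>) - a\<^sup>2*h/2)) \<partial>M) = 1"
proof -
  have d: "distributed M lborel (\<lambda>\<omega>. B (t+h) \<omega> - B t \<omega>) (\<lambda>x. ennreal (normal_density 0 (sqrt h) x))"
    using B_increment_distributed[of t "t+h"] assms by simp
  have "(\<integral>\<^sup>+\<omega>. ennreal (exp (a * (B (t+h) \<omega> - B t \<omega>) - a\<^sup>2*h/2)) \<partial>M)
     = (\<integral>\<^sup>+x. ennreal (normal_density 0 (sqrt h) x) * ennreal (exp (a*x - a\<^sup>2*h/2)) \<partial>lborel)"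
    by (rule distributed_nn_integral[OF d, symmetric]) simp
  also have "\<dots> = (\<integral>\<^sup>+x. ennreal (normal_density (a*h) (sqrt h) x) \<partial>lborel)"
  proof (rule nn_integral_cong)
    fix x :: real
    have e: "-(x)\<^sup>2/(2*h) + (a*x - a\<^sup>2*h/2) = -(x - a*h)\<^sup>2/(2*h)"
      using assms by (simp add: field_simps power2_eq_square)
    have "normal_density 0 (sqrt h) x * exp (a*x - a\<^sup>2*h/2)
        = 1 / sqrt (2 * pi * h) * (exp (-(x)\<^sup>2/(2*h)) * exp (a*x - a\<^sup>2*h/2))"
      using assms unfolding normal_density_def by simp
    also have "\<dots> = normal_density (a*h) (sqrt h) x"
      using assms unfolding normal_density_def exp_add[symmetric] e by simp
    finally show "ennreal (normal_density 0 (sqrt h) x) * ennreal (exp (a*x - a\<^sup>2*h/2))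
        = ennreal (normal_density (a*h) (sqrt h) x)"
      by (simp add: ennreal_mult''[symmetric])
  qed
  also have "\<dots> = 1"
    using assms by (subst nn_integral_eq_integral) auto
  finally show ?thesis .
qed

lemma indep_var_B_increment:
  fixes f :: "'a \<Rightarrow> ennreal" and g :: "real \<Rightarrow> ennreal"
  assumes t: "0 \<le> t" "0 < h" and f: "f \<in> borel_measurable (F t)" and g: "g \<in> borel_measurable borel"
  shows "indep_var borel f borel (\<lambda>\<omega>. g (B (t+h) \<omega> - B t \<omega>))"
proof -
  define D where "D = (\<lambda>\<omega>. B (t+h) \<omega> - B t \<omega>)"
  define Dsets where "Dsets = {D -` U \<inter> space M |U. U \<in> sets borel}"
  have Dm: "D \<in> borel_measurable M" unfolding D_def using t by simp
  have fM: "f \<in> borel_measurable M" using measurable_from_filtration[OF t(1) f] .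
  have gD: "g \<circ> D \<in> borel_measurable M" using g Dm by (simp add: measurable_comp)
  have stable: "Int_stable Dsets"
    unfolding Int_stable_def Dsets_def
  proof safe
    fix U V :: "real set" assume "U \<in> sets borel" "V \<in> sets borel"
    then show "\<exists>W. D -` U \<inter> space M \<inter> (D -` V \<inter> space M) = D -` W \<inter> space M \<and> W \<in> sets borel"
      by (intro exI[of _ "U \<inter> V"]) auto
  qed
  have "sigma_sets (space M) (sets (F t)) = sets (F t)"
    using sets.sigma_sets_eq[of "F t"] space_filtration[OF t(1)] by simp
  moreover have "Int_stable (sets (F t))" by (auto simp: Int_stable_def)
  ultimately have indep: "indep_set (sets (F t)) (sigma_sets (space M) Dsets)"
    using indep_set_sigma_sets[of "sets (F t)" Dsets] stable B_increment_indep[of t "t+h"] t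
    by (simp add: D_def Dsets_def)
  have sub_f: "sigma_sets (space M) {f -` A \<inter> space M |A. A \<in> sets borel} \<subseteq> sets (F t)"
  proof -
    have "{f -` A \<inter> space M |A. A \<in> sets borel} \<subseteq> sets (F t)"
      using measurable_sets[OF f] space_filtration[OF t(1)] by auto
    then show ?thesis
      using sets.sigma_sets_subset[of _ "F t"] space_filtration[OF t(1)] by simp
  qed
  have sub_g: "sigma_sets (space M) {(g \<circ> D) -` A \<inter> space M |A. A \<in> sets borel}
      \<subseteq> sigma_sets (space M) Dsets"
  proof (rule sigma_sets_mono')
    show "{(g \<circ> D) -` A \<inter> space M |A. A \<in> sets borel} \<subseteq> Dsets"
    proof safe
      fix A :: "ennreal set" assume A: "A \<in> sets borel"
      have "(g \<circ> D) -` A \<inter> space M = D -` (g -` A) \<inter> space M" by auto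
      then show "(g \<circ> D) -` A \<inter> space M \<in> Dsets"
        using measurable_sets[OF g A] unfolding Dsets_def by auto
    qed
  qed
  have "indep_var borel f borel (g \<circ> D)"
    using indep sub_f sub_g fM gD unfolding indep_var_eq indep_sets2_eq by blast
  then show ?thesis by (simp add: D_def comp_def)
qed

lemma nn_integral_mult_B_increment:
  fixes f :: "'a \<Rightarrow> ennreal" and g :: "real \<Rightarrow> ennreal"
  assumes t: "0 \<le> t" "0 < h" and f: "f \<in> borel_measurable (F t)" and g: "g \<in> borel_measurable borel"
  shows "(\<integral>\<^sup>+\<omega>. f \<omega> * g (B (t+h) \<omega> - B t \<omega>) \<partial>M)
       = (\<integral>\<^sup>+\<omega>. f \<omega> \<partial>M) * (\<integral>\<^sup>+\<omega>. g (B (t+h) \<omega> - B t \<omega>) \<partial>M)"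
proof -
  have "indep_vars (\<lambda>_. borel) (case_bool f (\<lambda>\<omega>. g (B (t+h) \<omega> - B t \<omega>))) UNIV"
    using indep_var_B_increment[OF assms] unfolding indep_var_def
    by (simp add: case_bool_if if_distrib cong: if_cong)
  then have "(\<integral>\<^sup>+\<omega>. (\<Prod>i\<in>UNIV. case_bool f (\<lambda>\<omega>. g (B (t+h) \<omega> - B t \<omega>)) i \<omega>) \<partial>M)
      = (\<Prod>i\<in>UNIV. \<integral>\<^sup>+\<omega>. case_bool f (\<lambda>\<omega>. g (B (t+h) \<omega> - B t \<omega>)) i \<omega> \<partial>M)"
    by (intro indep_vars_nn_integral) auto
  then show ?thesis by (simp add: UNIV_bool mult.commute)
qed

definition expmart :: "real \<Rightarrow> real \<Rightarrow> 'a \<Rightarrow> real" where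
  "expmart a t \<omega> = exp (a * B t \<omega> - a\<^sup>2 * t / 2)"

lemma expmart_measurable_filtration: "0 \<le> t \<Longrightarrow> expmart a t \<in> borel_measurable (F t)"
  unfolding expmart_def[abs_def] using B_measurable_filtration by measurable

lemma expmart_measurable: "0 \<le> t \<Longrightarrow> expmart a t \<in> borel_measurable M"
  using measurable_from_filtration expmart_measurable_filtration by blast

lemma expmart_pos: "0 < expmart a t \<omega>"
  by (simp add: expmart_def)

lemma expmart_zero: "\<omega> \<in> space M \<Longrightarrow> expmart a 0 \<omega> = 1"
  using B_zero by (simp add: expmart_def)

lemma expmart_square: "(expmart a t \<omega>)\<^sup>2 = expmart (2*a) t \<omega> * exp (a\<^sup>2 * t)"
  unfolding expmart_def power2_eq_square exp_add[symmetric] by (simp add: algebra_simps)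

lemma nn_integral_indicator_expmart_shift:
  assumes t: "0 \<le> t" "0 \<le> h" and A: "A \<in> sets (F t)"
  shows "(\<integral>\<^sup>+\<omega>. indicator A \<omega> * ennreal (expmart a (t+h) \<omega>) \<partial>M)
       = (\<integral>\<^sup>+\<omega>. indicator A \<omega> * ennreal (expmart a t \<omega>) \<partial>M)"
proof (cases "h = 0")
  case False
  then have h: "0 < h" using t by simp
  have split: "expmart a (t+h) \<omega> = expmart a t \<omega> * exp (a * (B (t+h) \<omega> - B t \<omega>) - a\<^sup>2*h/2)" for \<omega>
    unfolding expmart_def exp_add[symmetric] by (simp add: algebra_simps add_divide_distrib)
  have fF: "(\<lambda>\<omega>. indicator A \<omega> * ennreal (expmart a t \<omega>)) \<in> borel_measurable (F t)"
    using A expmart_measurable_filtration[OF t(1)] by measurable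
  have gb: "(\<lambda>x::real. ennreal (exp (a*x - a\<^sup>2*h/2))) \<in> borel_measurable borel" by measurable
  have "(\<integral>\<^sup>+\<omega>. indicator A \<omega> * ennreal (expmart a (t+h) \<omega>) \<partial>M)
      = (\<integral>\<^sup>+\<omega>. (indicator A \<omega> * ennreal (expmart a t \<omega>))
          * ennreal (exp (a * (B (t+h) \<omega> - B t \<omega>) - a\<^sup>2*h/2)) \<partial>M)"
    unfolding split by (simp add: ennreal_mult' expmart_pos less_imp_le mult.assoc)
  also have "\<dots> = (\<integral>\<^sup>+\<omega>. indicator A \<omega> * ennreal (expmart a t \<omega>) \<partial>M)
      * (\<integral>\<^sup>+\<omega>. ennreal (exp (a * (B (t+h) \<omega> - B t \<omega>) - a\<^sup>2*h/2)) \<partial>M)"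
    using nn_integral_mult_B_increment[OF t(1) h fF gb] by simp
  also have "\<dots> = (\<integral>\<^sup>+\<omega>. indicator A \<omega> * ennreal (expmart a t \<omega>) \<partial>M)"
    using nn_integral_exp_B_increment[OF t(1) h] by simp
  finally show ?thesis .
qed simp

lemma nn_integral_expmart:
  assumes "0 \<le> t" shows "(\<integral>\<^sup>+\<omega>. ennreal (expmart a t \<omega>) \<partial>M) = 1"
proof -
  have "space M \<in> sets (F 0)" using sets.top[of "F 0"] space_filtration[of 0] by simp
  then have "(\<integral>\<^sup>+\<omega>. indicator (space M) \<omega> * ennreal (expmart a (0 + t) \<omega>) \<partial>M)
      = (\<integral>\<^sup>+\<omega>. indicator (space M) \<omega> * ennreal (expmart a 0 \<omega>) \<partial>M)"
    using assms by (intro nn_integral_indicator_expmart_shift) auto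
  also have "\<dots> = (\<integral>\<^sup>+\<omega>. 1 \<partial>M)"
    by (intro nn_integral_cong) (simp add: expmart_zero)
  finally show ?thesis
    by (simp add: emeasure_space_1 cong: nn_integral_cong)
qed

lemma stopping_time_measurable[measurable]:
  assumes st: "stopping_time_inf M F \<tau>" shows "\<tau> \<in> borel_measurable M"
  unfolding borel_measurable_iff_Iic_ereal
proof
  fix a :: ereal
  consider "a = \<infinity>" | "a = -\<infinity> \<or> a < 0" | x where "a = ereal x" "0 \<le> x"
    by (cases a) (force simp: not_le)+
  then show "\<tau> -` {..a} \<inter> space M \<in> events"
  proof cases
    case 1
    then have "\<tau> -` {..a} \<inter> space M = space M" by auto
    then show ?thesis by simp
  next
    case 2
    then have "\<tau> -` {..a} \<inter> space M = {}"
      using stopping_time_nonneg[OF st] by (force simp: not_le)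
    then show ?thesis by simp
  next
    case 3
    then have "\<tau> -` {..a} \<inter> space M = {\<omega>\<in>space M. \<tau> \<omega> \<le> ereal x}" by auto
    then show ?thesis
      using stopping_time_le_sets[OF st \<open>0 \<le> x\<close>] sets_filtration_subset[OF \<open>0 \<le> x\<close>] by auto
  qed
qed

lemma stopping_time_level_sets:
  assumes st: "stopping_time_inf M F \<tau>" and D: "finite D" "D \<subseteq> {0..}" "d \<in> D"
    and vals: "\<forall>\<omega>\<in>space M. \<tau> \<omega> = \<infinity> \<or> \<tau> \<omega> \<in> ereal ` D"
  shows "{\<omega>\<in>space M. \<tau> \<omega> = ereal d} \<in> sets (F d)"
proof -
  let ?le = "\<lambda>d'. {\<omega>\<in>space M. \<tau> \<omega> \<le> ereal d'}"
  have d0: "0 \<le> d" using D by auto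
  have "{\<omega>\<in>space M. \<tau> \<omega> = ereal d} = ?le d - (\<Union>d'\<in>{d'\<in>D. d' < d}. ?le d')"
  proof safe
    fix \<omega> assume \<omega>: "\<omega> \<in> space M" "\<tau> \<omega> \<le> ereal d" "\<omega> \<notin> (\<Union>d'\<in>{d'\<in>D. d' < d}. ?le d')"
    from vals \<omega>(1,2) obtain d'' where "d'' \<in> D" "\<tau> \<omega> = ereal d''" by auto
    with \<omega> show "\<tau> \<omega> = ereal d" by (cases "d'' < d") auto
  qed auto
  moreover have "?le d' \<in> sets (F d)" if "d' \<in> D" "d' < d" for d'
    using stopping_time_le_sets[OF st, of d'] sets_filtration_mono[of d' d] that D by auto
  then have "(\<Union>d'\<in>{d'\<in>D. d' < d}. ?le d') \<in> sets (F d)"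
    using D by (intro sets.finite_UN) auto
  ultimately show ?thesis using stopping_time_le_sets[OF st d0] by auto
qed

lemma optional_stopping_finite_range:
  fixes w :: "real \<Rightarrow> ennreal"
  assumes st: "stopping_time_inf M F \<tau>" and D: "finite D" "D \<subseteq> {0..}"
    and vals: "\<forall>\<omega>\<in>space M. \<tau> \<omega> = \<infinity> \<or> \<tau> \<omega> \<in> ereal ` D"
    and h: "\<forall>d\<in>D. 0 \<le> h d"
  shows "(\<integral>\<^sup>+\<omega>. (if \<tau> \<omega> = \<infinity> then 0 else w (real_of_ereal (\<tau> \<omega>))
            * ennreal (expmart a (real_of_ereal (\<tau> \<omega>) + h (real_of_ereal (\<tau> \<omega>))) \<omega>)) \<partial>M)
       = (\<integral>\<^sup>+\<omega>. (if \<tau> \<omega> = \<infinity> then 0 else w (real_of_ereal (\<tau> \<omega>))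
            * ennreal (expmart a (real_of_ereal (\<tau> \<omega>)) \<omega>)) \<partial>M)"
proof -
  let ?S = "\<lambda>d. {\<omega>\<in>space M. \<tau> \<omega> = ereal d}"
  have SF: "?S d \<in> sets (F d)" if "d \<in> D" for d
    using stopping_time_level_sets[OF st D that vals] .
  have level_sum: "(\<integral>\<^sup>+\<omega>. (if \<tau> \<omega> = \<infinity> then 0 else w (real_of_ereal (\<tau> \<omega>))
            * ennreal (expmart a (g (real_of_ereal (\<tau> \<omega>))) \<omega>)) \<partial>M)
      = (\<Sum>d\<in>D. w d * (\<integral>\<^sup>+\<omega>. indicator (?S d) \<omega> * ennreal (expmart a (g d) \<omega>) \<partial>M))"
    if g: "\<forall>d\<in>D. 0 \<le> g d" for g
    using nn_integral_finite_range_eq_sum[OF D(1) vals, of "\<lambda>d \<omega>. w d * ennreal (expmart a (g d) \<omega>)"]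
      SF sets_filtration_subset D g expmart_measurable
    by (auto simp: mult.left_commute nn_integral_cmult intro!: sum.cong)
  have "\<forall>d\<in>D. 0 \<le> d + h d" "\<forall>d\<in>D. 0 \<le> d" using D h by auto
  moreover have "(\<Sum>d\<in>D. w d * (\<integral>\<^sup>+\<omega>. indicator (?S d) \<omega> * ennreal (expmart a (d + h d) \<omega>) \<partial>M))
      = (\<Sum>d\<in>D. w d * (\<integral>\<^sup>+\<omega>. indicator (?S d) \<omega> * ennreal (expmart a d \<omega>) \<partial>M))"
    using nn_integral_indicator_expmart_shift SF D h by (intro sum.cong refl) auto
  ultimately show ?thesis
    using level_sum[of "\<lambda>d. d + h d"] level_sum[of "\<lambda>d. d"] by simp
qed

text \<open>\<open>B\<close> frozen at its initial value for negative times: continuous on the whole line, hence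
  jointly measurable on \<open>M \<Otimes>\<^sub>M lborel\<close>, which allows evaluation at random times.\<close>

definition B_ext :: "real \<Rightarrow> 'a \<Rightarrow> real" where
  "B_ext t \<omega> = B (max 0 t) \<omega>"

lemma continuous_on_B_ext: "\<omega> \<in> space M \<Longrightarrow> continuous_on UNIV (\<lambda>t. B_ext t \<omega>)"
  unfolding B_ext_def
  by (rule continuous_on_compose2[OF continuous_on_B]) (auto intro!: continuous_intros)

lemma B_ext_measurable_pair[measurable]: "(\<lambda>(\<omega>, t). B_ext t \<omega>) \<in> borel_measurable (M \<Otimes>\<^sub>M lborel)"
proof -
  define G where "G n = (\<lambda>(\<omega>, t::real). B_ext (real_of_int \<lfloor>2^n * t\<rfloor> / 2^n) \<omega>)" for n :: nat
  have G: "G n \<in> borel_measurable (M \<Otimes>\<^sub>M lborel)" for n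
  proof -
    have "(\<lambda>x::'a \<times> real. B_ext (real_of_int i / 2^n) (fst x)) \<in> borel_measurable (M \<Otimes>\<^sub>M lborel)"
      for i :: int
      unfolding B_ext_def by (intro measurable_compose[OF measurable_fst B_measurable]) simp
    moreover have "(\<lambda>x::'a \<times> real. \<lfloor>2^n * snd x\<rfloor>) \<in> M \<Otimes>\<^sub>M lborel \<rightarrow>\<^sub>M count_space UNIV"
      by measurable
    ultimately show ?thesis
      using measurable_compose_countable by (force simp: G_def case_prod_beta)
  qed
  have lim: "(\<lambda>n. G n x) \<longlonglongrightarrow> (case x of (\<omega>, t) \<Rightarrow> B_ext t \<omega>)"
    if "x \<in> space (M \<Otimes>\<^sub>M lborel)" for x
    using that continuous_on_tendsto_compose[OF continuous_on_B_ext dyadic_floor_tendsto]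
    by (auto simp: G_def space_pair_measure)
  show ?thesis by (rule borel_measurable_LIMSEQ_real[OF lim G])
qed

lemma expmart_compose_measurable:
  assumes u: "u \<in> borel_measurable M" and nn: "\<And>\<omega>. \<omega> \<in> space M \<Longrightarrow> 0 \<le> u \<omega>"
  shows "(\<lambda>\<omega>. expmart a (u \<omega>) \<omega>) \<in> borel_measurable M"
proof -
  have "(\<lambda>\<omega>. exp (a * B_ext (u \<omega>) \<omega> - a\<^sup>2 * u \<omega> / 2)) \<in> borel_measurable M"
    using measurable_pair_compose_borel[OF B_ext_measurable_pair u] u by measurable
  then show ?thesis
    by (rule measurable_cong[THEN iffD1, rotated]) (simp add: expmart_def B_ext_def nn max_def)
qed

lemma stopping_time_dyadic_up:
  assumes st: "stopping_time_inf M F \<tau>" shows "stopping_time_inf M F (\<lambda>\<omega>. dyadic_up n (\<tau> \<omega>))"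
  unfolding stopping_time_inf_def
proof safe
  fix \<omega> assume "\<omega> \<in> space M"
  then show "0 \<le> dyadic_up n (\<tau> \<omega>)" by (intro dyadic_up_nonneg stopping_time_nonneg[OF st])
next
  fix t :: real assume t: "0 \<le> t"
  define t' where "t' = real_of_int \<lfloor>2^n * t\<rfloor> / 2^n"
  have "real_of_int \<lfloor>2^n * t\<rfloor> \<le> 2^n * t" by linarith
  then have t': "0 \<le> t'" "t' \<le> t"
    using t by (simp_all add: t'_def field_simps)
  have "{\<omega>\<in>space M. dyadic_up n (\<tau> \<omega>) \<le> ereal t} = {\<omega>\<in>space M. \<tau> \<omega> \<le> ereal t'}"
    using stopping_time_nonneg[OF st] by (auto simp: dyadic_up_le_iff t'_def)
  also have "\<dots> \<in> sets (F t)"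
    using stopping_time_le_sets[OF st t'(1)] sets_filtration_mono[OF t'] by blast
  finally show "{\<omega>\<in>space M. dyadic_up n (\<tau> \<omega>) \<le> ereal t} \<in> sets (F t)" .
qed

lemma stopping_time_restrict_le:
  assumes st: "stopping_time_inf M F \<tau>" and N: "0 \<le> N"
  shows "stopping_time_inf M F (\<lambda>\<omega>. if \<tau> \<omega> \<le> ereal N then \<tau> \<omega> else \<infinity>)"
  unfolding stopping_time_inf_def
proof safe
  fix \<omega> assume "\<omega> \<in> space M"
  then show "0 \<le> (if \<tau> \<omega> \<le> ereal N then \<tau> \<omega> else \<infinity>)" using stopping_time_nonneg[OF st] by simp
next
  fix t :: real assume t: "0 \<le> t"
  have "{\<omega>\<in>space M. (if \<tau> \<omega> \<le> ereal N then \<tau> \<omega> else \<infinity>) \<le> ereal t}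
      = {\<omega>\<in>space M. \<tau> \<omega> \<le> ereal (min t N)}"
    by (auto simp: min_def split: if_splits intro: order_trans)
  then show "{\<omega>\<in>space M. (if \<tau> \<omega> \<le> ereal N then \<tau> \<omega> else \<infinity>) \<le> ereal t} \<in> sets (F t)"
    using stopping_time_le_sets[OF st, of "min t N"] sets_filtration_mono[of "min t N" t] t N
    by auto
qed

definition stopped_expmart :: "real \<Rightarrow> real \<Rightarrow> ('a \<Rightarrow> ereal) \<Rightarrow> real \<Rightarrow> 'a \<Rightarrow> real" where
  "stopped_expmart c a \<tau> s \<omega> = (if \<tau> \<omega> = \<infinity> then 0
     else exp (c * real_of_ereal (\<tau> \<omega>)) * expmart a (real_of_ereal (\<tau> \<omega>) + s) \<omega>)"

lemma stopped_expmart_nonneg: "0 \<le> stopped_expmart c a \<tau> s \<omega>"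
  using expmart_pos[of a] by (simp add: stopped_expmart_def less_imp_le)

lemma stopped_expmart_measurable:
  assumes st: "stopping_time_inf M F \<tau>" and s: "0 \<le> s"
  shows "stopped_expmart c a \<tau> s \<in> borel_measurable M"
proof -
  have [measurable]: "\<tau> \<in> borel_measurable M" using st by measurable
  have [measurable]: "(\<lambda>\<omega>. expmart a (real_of_ereal (\<tau> \<omega>) + s) \<omega>) \<in> borel_measurable M"
    using stopping_time_real_nonneg[OF st] s by (intro expmart_compose_measurable) auto
  show ?thesis unfolding stopped_expmart_def[abs_def] by measurable
qed

lemma ennreal_stopped_expmart:
  "ennreal (stopped_expmart c a \<tau> s \<omega>) = (if \<tau> \<omega> = \<infinity> then 0
     else ennreal (exp (c * real_of_ereal (\<tau> \<omega>))) * ennreal (expmart a (real_of_ereal (\<tau> \<omega>) + s) \<omega>))"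
  by (simp add: stopped_expmart_def ennreal_mult')

lemma nn_integral_stopped_expmart_finite_range:
  assumes st: "stopping_time_inf M F \<tau>" and D: "finite D" "D \<subseteq> {0..}"
    and vals: "\<forall>\<omega>\<in>space M. \<tau> \<omega> = \<infinity> \<or> \<tau> \<omega> \<in> ereal ` D" and s: "0 \<le> s"
  shows "(\<integral>\<^sup>+\<omega>. ennreal (stopped_expmart c a \<tau> s \<omega>) \<partial>M)
       = (\<integral>\<^sup>+\<omega>. ennreal (stopped_expmart c a \<tau> 0 \<omega>) \<partial>M)"
proof -
  have "(\<integral>\<^sup>+\<omega>. ennreal (stopped_expmart c a \<tau> s \<omega>) \<partial>M)
      = (\<integral>\<^sup>+\<omega>. (if \<tau> \<omega> = \<infinity> then 0 else ennreal (exp (c * real_of_ereal (\<tau> \<omega>)))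
            * ennreal (expmart a (real_of_ereal (\<tau> \<omega>) + s) \<omega>)) \<partial>M)"
    by (simp add: ennreal_stopped_expmart)
  also have "\<dots> = (\<integral>\<^sup>+\<omega>. (if \<tau> \<omega> = \<infinity> then 0 else ennreal (exp (c * real_of_ereal (\<tau> \<omega>)))
            * ennreal (expmart a (real_of_ereal (\<tau> \<omega>)) \<omega>)) \<partial>M)"
    using optional_stopping_finite_range[OF st D vals, of "\<lambda>_. s"] s by simp
  also have "\<dots> = (\<integral>\<^sup>+\<omega>. ennreal (stopped_expmart c a \<tau> 0 \<omega>) \<partial>M)"
    by (simp add: ennreal_stopped_expmart cong: if_cong)
  finally show ?thesis .
qed

lemma stopped_expmart_square_le:
  assumes nn: "0 \<le> \<tau> \<omega>" and L: "\<tau> \<omega> \<noteq> \<infinity> \<Longrightarrow> real_of_ereal (\<tau> \<omega>) + s \<le> L" and c: "c \<le> 0"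
  shows "(stopped_expmart c a \<tau> s \<omega>)\<^sup>2 \<le> exp (a\<^sup>2 * L) * stopped_expmart 0 (2*a) \<tau> s \<omega>"
proof (cases "\<tau> \<omega> = \<infinity>")
  case False
  define T where "T = real_of_ereal (\<tau> \<omega>)"
  have "0 \<le> T" "T + s \<le> L"
    using nn L False by (auto simp: T_def real_of_ereal_pos)
  then have "(exp (c * T))\<^sup>2 \<le> 1"
    using c by (simp add: mult_nonpos_nonneg power_le_one)
  have "(stopped_expmart c a \<tau> s \<omega>)\<^sup>2 = (exp (c * T))\<^sup>2 * (expmart a (T + s) \<omega>)\<^sup>2"
    using False by (simp add: stopped_expmart_def T_def power_mult_distrib)
  also have "\<dots> \<le> 1 * (expmart a (T + s) \<omega>)\<^sup>2"
    by (rule mult_right_mono) (use \<open>(exp (c * T))\<^sup>2 \<le> 1\<close> in simp_all)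
  also have "\<dots> = expmart (2*a) (T + s) \<omega> * exp (a\<^sup>2 * (T + s))"
    by (simp add: expmart_square)
  also have "\<dots> \<le> expmart (2*a) (T + s) \<omega> * exp (a\<^sup>2 * L)"
    using \<open>T + s \<le> L\<close> expmart_pos[of "2*a"] by (intro mult_left_mono) (simp_all add: mult_left_mono less_imp_le)
  finally show ?thesis
    using False by (simp add: T_def stopped_expmart_def mult.commute)
qed (simp add: stopped_expmart_def)

text \<open>The second moment is controlled by \<open>stopped_expmart 0 (2 a)\<close>, which optional stopping
  pushes forward to the fixed time \<open>L\<close>.\<close>

lemma nn_integral_stopped_expmart_square_le:
  assumes st: "stopping_time_inf M F \<tau>" and D: "finite D" "D \<subseteq> {0..}"
    and vals: "\<forall>\<omega>\<in>space M. \<tau> \<omega> = \<infinity> \<or> \<tau> \<omega> \<in> ereal ` D"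
    and s: "0 \<le> s" and L0: "0 \<le> L" and L: "\<forall>d\<in>D. d + s \<le> L" and c: "c \<le> 0"
  shows "(\<integral>\<^sup>+\<omega>. ennreal ((stopped_expmart c a \<tau> s \<omega>)\<^sup>2) \<partial>M) \<le> ennreal (exp (a\<^sup>2 * L))"
proof -
  let ?N = "\<lambda>\<omega>. ennreal (stopped_expmart 0 (2*a) \<tau> s \<omega>)"
  let ?at = "\<lambda>g. (\<integral>\<^sup>+\<omega>. (if \<tau> \<omega> = \<infinity> then 0
      else ennreal (expmart (2*a) (g (real_of_ereal (\<tau> \<omega>))) \<omega>)) \<partial>M)"
  have "\<forall>d\<in>D. 0 \<le> L - d" using L s by force
  then have "?at (\<lambda>_. L) = ?at (\<lambda>d. d)"
    using optional_stopping_finite_range[OF st D vals, of "\<lambda>d. L - d" "\<lambda>_. 1"] by (simp cong: if_cong)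
  moreover have "(\<integral>\<^sup>+\<omega>. ?N \<omega> \<partial>M) = ?at (\<lambda>d. d)"
    using optional_stopping_finite_range[OF st D vals, of "\<lambda>_. s" "\<lambda>_. 1"] s
    by (simp add: ennreal_stopped_expmart cong: if_cong)
  ultimately have "(\<integral>\<^sup>+\<omega>. ?N \<omega> \<partial>M) = ?at (\<lambda>_. L)" by simp
  also have "\<dots> \<le> (\<integral>\<^sup>+\<omega>. ennreal (expmart (2*a) L \<omega>) \<partial>M)"
    by (intro nn_integral_mono) simp
  also have "\<dots> = 1" using nn_integral_expmart[OF L0] .
  finally have N: "(\<integral>\<^sup>+\<omega>. ?N \<omega> \<partial>M) \<le> 1" .
  have "(\<integral>\<^sup>+\<omega>. ennreal ((stopped_expmart c a \<tau> s \<omega>)\<^sup>2) \<partial>M) \<le> (\<integral>\<^sup>+\<omega>. ennreal (exp (a\<^sup>2 * L)) * ?N \<omega> \<partial>M)"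
    using stopping_time_nonneg[OF st] vals L stopped_expmart_nonneg c
    by (intro nn_integral_mono) (force simp: ennreal_mult'[symmetric] intro!: ennreal_leI stopped_expmart_square_le)
  also have "\<dots> = ennreal (exp (a\<^sup>2 * L)) * (\<integral>\<^sup>+\<omega>. ?N \<omega> \<partial>M)"
    using stopped_expmart_measurable[OF st s] by (intro nn_integral_cmult) simp
  also have "\<dots> \<le> ennreal (exp (a\<^sup>2 * L))"
    using mult_left_mono[OF N] by simp
  finally show ?thesis .
qed

lemma stopped_expmart_dyadic_up_tendsto:
  assumes \<omega>: "\<omega> \<in> space M" and nn: "0 \<le> \<tau> \<omega>" and u: "0 \<le> u"
  shows "(\<lambda>n. stopped_expmart c a (\<lambda>\<omega>. dyadic_up n (\<tau> \<omega>)) u \<omega>) \<longlonglongrightarrow> stopped_expmart c a \<tau> u \<omega>"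
proof (cases "\<tau> \<omega> = \<infinity>")
  case False
  then obtain x where x: "\<tau> \<omega> = ereal x" "0 \<le> x" using nn by (cases "\<tau> \<omega>") auto
  have "continuous_on {0..} (\<lambda>y. B (y + u) \<omega>)"
    by (rule continuous_on_compose2[OF continuous_on_B[OF \<omega>]]) (auto intro!: continuous_intros simp: u)
  then have "continuous_on {0..} (\<lambda>y. exp (c * y) * expmart a (y + u) \<omega>)"
    unfolding expmart_def by (intro continuous_intros) auto
  moreover have "real_of_ereal (dyadic_up n (\<tau> \<omega>)) \<in> {0..}" for n
    using dyadic_up_nonneg[OF nn, of n] False by (simp add: real_of_ereal_pos)
  ultimately have "(\<lambda>n. exp (c * real_of_ereal (dyadic_up n (\<tau> \<omega>)))
        * expmart a (real_of_ereal (dyadic_up n (\<tau> \<omega>)) + u) \<omega>)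
      \<longlonglongrightarrow> exp (c * x) * expmart a (x + u) \<omega>"
    using dyadic_up_tendsto[OF False] x
    by (intro continuous_on_tendsto_compose[where f = "\<lambda>y. exp (c * y) * expmart a (y + u) \<omega>"]) auto
  then show ?thesis using False x by (simp add: stopped_expmart_def)
qed (simp add: stopped_expmart_def)

lemma optional_stopping_bounded:
  assumes st: "stopping_time_inf M F \<tau>" and N: "0 \<le> N"
    and bounded: "\<forall>\<omega>\<in>space M. \<tau> \<omega> = \<infinity> \<or> \<tau> \<omega> \<le> ereal N"
    and s: "0 \<le> s" and c: "c \<le> 0"
  shows "(\<integral>\<^sup>+\<omega>. ennreal (stopped_expmart c a \<tau> s \<omega>) \<partial>M)
       = (\<integral>\<^sup>+\<omega>. ennreal (stopped_expmart c a \<tau> 0 \<omega>) \<partial>M)"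
proof -
  define \<rho> where "\<rho> n \<omega> = dyadic_up n (\<tau> \<omega>)" for n \<omega>
  have st\<rho>: "stopping_time_inf M F (\<rho> n)" for n
    unfolding \<rho>_def by (rule stopping_time_dyadic_up[OF st])
  have vals: "\<forall>\<omega>\<in>space M. \<rho> n \<omega> = \<infinity> \<or> \<rho> n \<omega> \<in> ereal ` dyadic_grid n N" for n
  proof
    fix \<omega> assume "\<omega> \<in> space M"
    then show "\<rho> n \<omega> = \<infinity> \<or> \<rho> n \<omega> \<in> ereal ` dyadic_grid n N"
      using bounded stopping_time_nonneg[OF st] dyadic_up_in_grid[of "\<tau> \<omega>" N n]
      by (cases "\<tau> \<omega> = \<infinity>") (auto simp: \<rho>_def)
  qed
  have lim: "(\<lambda>n. \<integral>\<^sup>+\<omega>. ennreal (stopped_expmart c a (\<rho> n) u \<omega>) \<partial>M)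
      \<longlonglongrightarrow> (\<integral>\<^sup>+\<omega>. ennreal (stopped_expmart c a \<tau> u \<omega>) \<partial>M)" if u: "0 \<le> u" for u
  proof (rule nn_integral_tendsto_if_L2_bounded)
    show "stopped_expmart c a (\<rho> n) u \<in> borel_measurable M" for n
      by (rule stopped_expmart_measurable[OF st\<rho> u])
    show "stopped_expmart c a \<tau> u \<in> borel_measurable M"
      by (rule stopped_expmart_measurable[OF st u])
    show "(\<lambda>n. stopped_expmart c a (\<rho> n) u \<omega>) \<longlonglongrightarrow> stopped_expmart c a \<tau> u \<omega>"
      if "\<omega> \<in> space M" for \<omega>
      unfolding \<rho>_def by (rule stopped_expmart_dyadic_up_tendsto[where \<tau> = \<tau>, OF that stopping_time_nonneg[OF st that] u])
    show "(\<integral>\<^sup>+\<omega>. ennreal ((stopped_expmart c a (\<rho> n) u \<omega>)\<^sup>2) \<partial>M) \<le> ennreal (exp (a\<^sup>2 * (N + 1 + u)))"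
      for n
      using dyadic_grid_le[OF N] N u
      by (intro nn_integral_stopped_expmart_square_le[OF st\<rho> dyadic_grid_finite dyadic_grid_nonneg
          vals u _ _ c]) fastforce+
  qed (simp_all add: stopped_expmart_nonneg)
  have "(\<integral>\<^sup>+\<omega>. ennreal (stopped_expmart c a (\<rho> n) s \<omega>) \<partial>M)
      = (\<integral>\<^sup>+\<omega>. ennreal (stopped_expmart c a (\<rho> n) 0 \<omega>) \<partial>M)" for n
    by (rule nn_integral_stopped_expmart_finite_range[OF st\<rho> dyadic_grid_finite dyadic_grid_nonneg
        vals s])
  then have "(\<lambda>n. \<integral>\<^sup>+\<omega>. ennreal (stopped_expmart c a (\<rho> n) 0 \<omega>) \<partial>M)
      \<longlonglongrightarrow> (\<integral>\<^sup>+\<omega>. ennreal (stopped_expmart c a \<tau> s \<omega>) \<partial>M)"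
    using lim[OF s] by simp
  then show ?thesis using lim[OF order_refl] by (rule LIMSEQ_unique)
qed

text \<open>Unbounded stopping times are handled by monotone convergence over the events
  \<open>{\<tau> \<le> N}\<close>.\<close>

lemma optional_stopping:
  assumes st: "stopping_time_inf M F \<tau>" and s: "0 \<le> s" and c: "c \<le> 0"
  shows "(\<integral>\<^sup>+\<omega>. ennreal (stopped_expmart c a \<tau> s \<omega>) \<partial>M)
       = (\<integral>\<^sup>+\<omega>. ennreal (stopped_expmart c a \<tau> 0 \<omega>) \<partial>M)"
proof -
  define \<tau>N where "\<tau>N N \<omega> = (if \<tau> \<omega> \<le> ereal (real N) then \<tau> \<omega> else \<infinity>)" for N :: nat and \<omega>
  have stN: "stopping_time_inf M F (\<tau>N N)" for N
    unfolding \<tau>N_def by (rule stopping_time_restrict_le[OF st]) simp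
  have restrict: "stopped_expmart c a (\<tau>N N) u \<omega>
      = (if \<tau> \<omega> \<le> ereal (real N) then stopped_expmart c a \<tau> u \<omega> else 0)" for N u \<omega>
    by (simp add: stopped_expmart_def \<tau>N_def)
  have lim: "(\<lambda>N. \<integral>\<^sup>+\<omega>. ennreal (stopped_expmart c a (\<tau>N N) u \<omega>) \<partial>M)
      \<longlonglongrightarrow> (\<integral>\<^sup>+\<omega>. ennreal (stopped_expmart c a \<tau> u \<omega>) \<partial>M)" if u: "0 \<le> u" for u
  proof (rule nn_integral_LIMSEQ)
    show "incseq (\<lambda>N \<omega>. ennreal (stopped_expmart c a (\<tau>N N) u \<omega>))"
      unfolding restrict using stopped_expmart_nonneg
      by (intro incseq_SucI le_funI) (auto intro: order_trans ennreal_leI)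
    show "(\<lambda>\<omega>. ennreal (stopped_expmart c a (\<tau>N N) u \<omega>)) \<in> borel_measurable M" for N
      using stopped_expmart_measurable[OF stN u] by measurable
    fix \<omega>
    show "(\<lambda>N. ennreal (stopped_expmart c a (\<tau>N N) u \<omega>)) \<longlonglongrightarrow> ennreal (stopped_expmart c a \<tau> u \<omega>)"
    proof (cases "\<tau> \<omega>")
      case (real x)
      obtain N0 :: nat where "x \<le> real N0" using real_arch_simple by blast
      then have "\<forall>N\<ge>N0. ennreal (stopped_expmart c a (\<tau>N N) u \<omega>) = ennreal (stopped_expmart c a \<tau> u \<omega>)"
        using real by (auto simp: restrict)
      then show ?thesis by (intro tendsto_eventually eventually_sequentiallyI[of N0]) auto
    qed (simp_all add: stopped_expmart_def \<tau>N_def)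
  qed
  have "(\<integral>\<^sup>+\<omega>. ennreal (stopped_expmart c a (\<tau>N N) s \<omega>) \<partial>M)
      = (\<integral>\<^sup>+\<omega>. ennreal (stopped_expmart c a (\<tau>N N) 0 \<omega>) \<partial>M)" for N
    by (rule optional_stopping_bounded[OF stN _ _ s c, where N = "real N"]) (simp_all add: \<tau>N_def)
  then have "(\<lambda>N. \<integral>\<^sup>+\<omega>. ennreal (stopped_expmart c a (\<tau>N N) 0 \<omega>) \<partial>M)
      \<longlonglongrightarrow> (\<integral>\<^sup>+\<omega>. ennreal (stopped_expmart c a \<tau> s \<omega>) \<partial>M)"
    using lim[OF s] by simp
  then show ?thesis using lim[OF order_refl] by (rule LIMSEQ_unique)
qed

end

section \<open>Discounted payoffs on random intervals\<close>

definition ereal_Ico :: "ereal \<Rightarrow> ereal \<Rightarrow> real set" where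
  "ereal_Ico a b = {t. a \<le> ereal t \<and> ereal t < b}"

lemma ereal_Ico_sets[measurable]: "ereal_Ico a b \<in> sets lborel"
proof -
  have "Measurable.pred lborel (\<lambda>t. a \<le> ereal t \<and> ereal t < b)" by measurable
  then show ?thesis by (simp add: pred_def ereal_Ico_def)
qed

lemma ereal_Ico_ereal[simp]: "ereal_Ico (ereal x) (ereal y) = {x..<y}"
  by (auto simp: ereal_Ico_def)

lemma ereal_Ico_infinity: "ereal_Ico \<infinity> b = {}"
  by (auto simp: ereal_Ico_def)

lemma ereal_Ico_subset: "0 \<le> a \<Longrightarrow> ereal_Ico a b \<subseteq> {0..}"
  by (auto simp: ereal_Ico_def) (metis ereal_less_eq(5) order_trans)

lemma indicator_ereal_Ico_shift:
  assumes "0 \<le> a" "a \<le> b" "0 \<le> d"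
  shows "indicator (ereal_Ico (a + ereal d) (b + ereal d)) t
    = (indicator (ereal_Ico a b) t - indicator (ereal_Ico a (a + ereal d)) t
        + indicator (ereal_Ico b (b + ereal d)) t :: real)"
  using assms by (cases a; cases b) (auto simp: ereal_Ico_def indicator_def)

lemma run_int_ereal_Ico: "run_int r C P a b = (LINT t:ereal_Ico a b|lborel. exp (-r*t) * (P t - C))"
  by (simp add: run_int_def ereal_Ico_def)

lemma run_int_infinity: "run_int r C P \<infinity> b = 0"
  by (simp add: run_int_ereal_Ico ereal_Ico_infinity set_lebesgue_integral_def)

lemma run_int_shift:
  assumes int: "set_integrable lborel {0..} (\<lambda>t. exp (-r*t) * (P t - C))"
    and ab: "0 \<le> a" "a \<le> b" and d: "0 \<le> d"
  shows "run_int r C P (a + ereal d) (b + ereal d)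
    = run_int r C P a b - run_int r C P a (a + ereal d) + run_int r C P b (b + ereal d)"
proof -
  let ?h = "\<lambda>t. exp (-r*t) * (P t - C)"
  have i: "integrable lborel (\<lambda>t. indicator (ereal_Ico e e') t *\<^sub>R ?h t)" if "0 \<le> e" for e e'
    using set_integrable_subset[OF int ereal_Ico_sets ereal_Ico_subset[OF that]]
    unfolding set_integrable_def .
  have "0 \<le> b" using ab by (rule order_trans)
  have "run_int r C P (a + ereal d) (b + ereal d)
      = (\<integral>t. (indicator (ereal_Ico a b) t *\<^sub>R ?h t - indicator (ereal_Ico a (a + ereal d)) t *\<^sub>R ?h t)
          + indicator (ereal_Ico b (b + ereal d)) t *\<^sub>R ?h t \<partial>lborel)"
    unfolding run_int_ereal_Ico set_lebesgue_integral_def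
    by (intro Bochner_Integration.integral_cong refl)
      (simp add: indicator_ereal_Ico_shift[OF ab d] algebra_simps)
  also have "\<dots> = run_int r C P a b - run_int r C P a (a + ereal d) + run_int r C P b (b + ereal d)"
    using i[OF ab(1)] i[OF \<open>0 \<le> b\<close>]
    by (simp add: run_int_ereal_Ico set_lebesgue_integral_def)
  finally show ?thesis .
qed

lemma integral_exp_Ico:
  fixes r d x :: real
  assumes "r \<noteq> 0" "0 \<le> d"
  shows "(LINT t:{x..<x+d}|lborel. exp (-r*t)) = exp (-r*x) * (1 - exp (-r*d)) / r"
proof -
  have "(LINT t:{x..<x+d}|lborel. exp (-r*t)) = (LINT t:{x..x+d}|lborel. exp (-r*t))"
  proof (rule set_integral_cong_set)
    show "AE t in lborel. t \<in> {x..x+d} \<longleftrightarrow> t \<in> {x..<x+d}"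
      using AE_lborel_singleton[of "x+d"] by eventually_elim auto
  qed (unfold set_borel_measurable_def; measurable)+
  also have "\<dots> = (- exp (-r*(x+d)) / r) - (- exp (-r*x) / r)"
    unfolding set_lebesgue_integral_def
  proof (rule integral_FTC_atLeastAtMost)
    fix y :: real
    show "((\<lambda>t. - exp (-r*t) / r) has_vector_derivative exp (-r*y)) (at y within {x..x+d})"
      unfolding has_real_derivative_iff_has_vector_derivative[symmetric]
      using assms by (auto intro!: derivative_eq_intros)
  qed (use assms in \<open>auto intro!: continuous_intros\<close>)
  also have "\<dots> = exp (-r*x) * (1 - exp (-r*d)) / r"
    using assms by (simp add: field_simps distrib_left exp_add[symmetric])
  finally show ?thesis .
qed
lemma run_int_window:
  assumes P: "continuous_on {0..} P" and r: "r \<noteq> 0" and d: "0 \<le> d" and e: "0 \<le> e"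
  shows "run_int r C P e (e + ereal d)
    = run_int r 0 P e (e + ereal d) - disc_at r (\<lambda>_. C * (1 - exp (-r*d)) / r) e"
proof (cases e)
  case (real x)
  have "set_integrable lborel {x..x+d} (\<lambda>t. exp (-r*t) * P t)"
    using real e by (intro borel_integrable_atLeastAtMost' continuous_on_subset[OF P]
        continuous_intros) auto
  then have iP: "set_integrable lborel {x..<x+d} (\<lambda>t. exp (-r*t) * P t)"
    by (rule set_integrable_subset) auto
  have "set_integrable lborel {x..x+d} (\<lambda>t. C * exp (-r*t))"
    by (intro borel_integrable_atLeastAtMost' continuous_intros)
  then have iC: "set_integrable lborel {x..<x+d} (\<lambda>t. C * exp (-r*t))"
    by (rule set_integrable_subset) auto
  have "run_int r C P e (e + ereal d) = (LINT t:{x..<x+d}|lborel. exp (-r*t) * P t - C * exp (-r*t))"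
    using real by (simp add: run_int_ereal_Ico algebra_simps)
  also have "\<dots> = run_int r 0 P e (e + ereal d) - C * (LINT t:{x..<x+d}|lborel. exp (-r*t))"
    unfolding set_integral_diff(2)[OF iP iC] set_integral_mult_right using real
    by (simp add: run_int_ereal_Ico)
  finally show ?thesis
    using integral_exp_Ico[OF r d, of x] real by (simp add: disc_at_def)
qed (use e in \<open>simp_all add: run_int_infinity disc_at_def\<close>)

lemma disc_at_shift: "disc_at r f (e + ereal d) = disc_at r (\<lambda>t. exp (-r*d) * f (t + d)) e"
  by (cases e) (simp_all add: disc_at_def algebra_simps flip: exp_add)

lemma disc_at_affine: "disc_at r (\<lambda>t. k * f t + c) e = k * disc_at r f e + disc_at r (\<lambda>_. c) e"
  by (cases e) (simp_all add: disc_at_def algebra_simps)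

lemma run_int_cong_nonneg:
  assumes "0 \<le> a" "\<And>t. 0 \<le> t \<Longrightarrow> P t = Q t"
  shows "run_int r C P a b = run_int r C Q a b"
  unfolding run_int_ereal_Ico
  using assms ereal_Ico_subset[OF assms(1), of b] ereal_Ico_sets[of a b]
  by (intro set_lebesgue_integral_cong) auto

lemma disc_at_cong_nonneg:
  assumes "0 \<le> e" "\<And>t. 0 \<le> t \<Longrightarrow> f t = g t"
  shows "disc_at r f e = disc_at r g e"
  using assms by (cases e) (simp_all add: disc_at_def)

lemma disc_at_measurable:
  assumes f: "(\<lambda>(\<omega>, t). f \<omega> t) \<in> borel_measurable (M \<Otimes>\<^sub>M lborel)" and e[measurable]: "e \<in> borel_measurable M"
  shows "(\<lambda>\<omega>. disc_at r (f \<omega>) (e \<omega>)) \<in> borel_measurable M"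
proof -
  have [measurable]: "(\<lambda>\<omega>. f \<omega> (real_of_ereal (e \<omega>))) \<in> borel_measurable M"
    by (rule measurable_pair_compose_borel[OF f]) measurable
  have "(\<lambda>\<omega>. if \<bar>e \<omega>\<bar> = \<infinity> then 0 else exp (-r * real_of_ereal (e \<omega>)) * f \<omega> (real_of_ereal (e \<omega>)))
      \<in> borel_measurable M" by measurable
  then show ?thesis
    by (rule measurable_cong[THEN iffD1, rotated]) (auto simp: disc_at_def split: ereal.split)
qed

lemma run_int_measurable:
  assumes P: "(\<lambda>(\<omega>, t). P \<omega> t) \<in> borel_measurable (M \<Otimes>\<^sub>M lborel)"
    and [measurable]: "a \<in> borel_measurable M" "b \<in> borel_measurable M"
  shows "(\<lambda>\<omega>. run_int r C (P \<omega>) (a \<omega>) (b \<omega>)) \<in> borel_measurable M"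
proof -
  note P[measurable]
  have "(\<lambda>(\<omega>, t). indicator (ereal_Ico (a \<omega>) (b \<omega>)) t * (exp (-r*t) * (P \<omega> t - C)))
      \<in> borel_measurable (M \<Otimes>\<^sub>M lborel)"
    unfolding ereal_Ico_def indicator_def by measurable
  from lborel.borel_measurable_lebesgue_integral[OF this] show ?thesis
    by (simp add: run_int_ereal_Ico set_lebesgue_integral_def)
qed

lemma nn_integral_exp_atLeast_0:
  fixes c :: real
  assumes "c < 0" shows "(\<integral>\<^sup>+t\<in>{0..}. ennreal (exp (c*t)) \<partial>lborel) = ennreal (- 1 / c)"
proof -
  have "((\<lambda>t. exp (c*t)) \<longlongrightarrow> 0) at_top"
    using assms by real_asymp
  then have "((\<lambda>t. exp (c*t) / c) \<longlongrightarrow> 0) at_top"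
    using tendsto_divide_zero by blast
  then have "(\<integral>\<^sup>+t\<in>{0..}. ennreal (exp (c*t)) \<partial>lborel) = ennreal (0 - exp (c*0) / c)"
    using assms by (intro nn_integral_FTC_atLeast) (auto intro!: derivative_eq_intros)
  then show ?thesis by simp
qed

lemma set_integrable_exp_atLeast_0:
  fixes c :: real
  assumes "c < 0" shows "set_integrable lborel {0..} (\<lambda>t. exp (c*t))"
  unfolding set_integrable_def
proof (rule integrableI_bounded)
  have "(\<integral>\<^sup>+t. ennreal (norm (indicator {0..} t *\<^sub>R exp (c*t))) \<partial>lborel)
      = (\<integral>\<^sup>+t\<in>{0..}. ennreal (exp (c*t)) \<partial>lborel)"
    by (intro nn_integral_cong) (simp add: indicator_def)
  then show "(\<integral>\<^sup>+t. ennreal (norm (indicator {0..} t *\<^sub>R exp (c*t))) \<partial>lborel) < \<infinity>"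
    using nn_integral_exp_atLeast_0[OF assms] by simp
qed simp

lemma nn_integral_exp_Ico_k1:
  assumes "\<mu> \<noteq> r" "0 \<le> \<delta>"
  shows "(\<integral>\<^sup>+s. ennreal (exp ((\<mu> - r) * s)) * indicator {0..<\<delta>} s \<partial>lborel) = ennreal (k1 \<mu> r \<delta>)"
proof -
  have "(\<integral>\<^sup>+s. ennreal (exp ((\<mu> - r) * s)) * indicator {0..<\<delta>} s \<partial>lborel)
      = (\<integral>\<^sup>+s\<in>{0..\<delta>}. ennreal (exp ((\<mu> - r) * s)) \<partial>lborel)"
    by (intro nn_integral_cong_AE, rule AE_mp[OF AE_lborel_singleton[of \<delta>]], rule AE_I2)
      (auto simp: indicator_def)
  also have "\<dots> = ennreal (exp ((\<mu> - r) * \<delta>) / (\<mu>-r) - exp ((\<mu> - r) * 0) / (\<mu>-r))"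
    using assms by (intro nn_integral_FTC_Icc) (auto intro!: derivative_eq_intros)
  also have "\<dots> = ennreal (k1 \<mu> r \<delta>)"
    by (simp add: k1_def diff_divide_distrib)
  finally show ?thesis .
qed

lemma k1_pos: "\<mu> < r \<Longrightarrow> 0 < \<delta> \<Longrightarrow> 0 < k1 \<mu> r \<delta>"
  unfolding k1_def by (intro divide_neg_neg) (simp_all add: mult_neg_pos)

lemma delayed_reward_decomposition:
  fixes P :: "real \<Rightarrow> real" and \<mu> :: real
  assumes P: "continuous_on {0..} P" and int: "set_integrable lborel {0..} (\<lambda>t. exp (-r*t) * P t)"
    and r: "0 < r" and \<delta>: "0 \<le> \<delta>" and ab: "0 \<le> a" "a \<le> b"
  defines "W e \<equiv> run_int r 0 P e (e + ereal \<delta>) - k1 \<mu> r \<delta> * disc_at r P e"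
  shows "run_int r C P (a + ereal \<delta>) (b + ereal \<delta>) - disc_at r (\<lambda>_. KI) (a + ereal \<delta>)
         - disc_at r (\<lambda>_. KO) (b + ereal \<delta>)
    = run_int r C P a b - disc_at r (\<lambda>t. k1 \<mu> r \<delta> * P t + k0 r C KI \<delta>) a
         - disc_at r (\<lambda>t. l1 \<mu> r \<delta> * P t + l0 r C KO \<delta>) b + W b - W a"
proof -
  have "0 \<le> b" using ab by (rule order_trans)
  have "set_integrable lborel {0..} (\<lambda>t. exp (-r*t) * P t - C * exp (-r*t))"
    using int set_integrable_exp_atLeast_0[of "-r"] r
    by (intro set_integral_diff(1) set_integrable_mult_right) auto
  then have "set_integrable lborel {0..} (\<lambda>t. exp (-r*t) * (P t - C))"
    by (simp add: algebra_simps)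
  note shift = run_int_shift[OF this ab \<delta>]
  have window: "run_int r C P e (e + ereal \<delta>)
      = run_int r 0 P e (e + ereal \<delta>) - disc_at r (\<lambda>_. C * (1 - exp (-r*\<delta>)) / r) e" if "0 \<le> e" for e
    using r by (intro run_int_window[OF P _ \<delta> that]) simp
  have l1: "l1 \<mu> r \<delta> = - k1 \<mu> r \<delta>" by (simp add: l1_def k1_def minus_divide_left)
  show ?thesis
    unfolding shift window[OF ab(1)] window[OF \<open>0 \<le> b\<close>] disc_at_shift disc_at_affine W_def l1
    using ab r by (cases a; cases b) (simp_all add: disc_at_def k0_def l0_def field_simps)
qed

locale discounted_gbm = brownian_filtration M F B for M :: "'a measure" and F B +
  fixes \<mu> \<sigma> r p \<delta> :: real
  assumes r_pos: "0 < r" and mu_less_r: "\<mu> < r" and p_pos: "0 < p" and delta_pos: "0 < \<delta>"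
begin

interpretation M_lborel: pair_sigma_finite M lborel
  by (intro pair_sigma_finite.intro sigma_finite_measure_axioms lborel.sigma_finite_measure_axioms)

text \<open>The price process \<open>gbm \<mu> \<sigma> p B\<close>, written with \<open>B_ext\<close> so that it is jointly measurable
  and continuous on the whole line; the two agree on \<open>t \<ge> 0\<close>.\<close>

definition price :: "'a \<Rightarrow> real \<Rightarrow> real" where
  "price \<omega> t = p * exp ((\<mu> - \<sigma>\<^sup>2 / 2) * t + \<sigma> * B_ext t \<omega>)"

lemma gbm_eq_price: "0 \<le> t \<Longrightarrow> gbm \<mu> \<sigma> p B t \<omega> = price \<omega> t"
  by (simp add: gbm_def price_def B_ext_def)

lemma price_measurable_pair[measurable]: "(\<lambda>(\<omega>, t). price \<omega> t) \<in> borel_measurable (M \<Otimes>\<^sub>M lborel)"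
  unfolding price_def by measurable

lemma continuous_on_price: "\<omega> \<in> space M \<Longrightarrow> continuous_on UNIV (price \<omega>)"
  unfolding price_def using continuous_on_B_ext by (auto intro!: continuous_intros)

lemma price_pos: "0 < price \<omega> t"
  using p_pos by (simp add: price_def)

lemma discounted_price_eq_expmart:
  "0 \<le> t \<Longrightarrow> exp (-r*t) * price \<omega> t = p * exp ((\<mu> - r) * t) * expmart \<sigma> t \<omega>"
  unfolding price_def expmart_def B_ext_def by (simp add: mult_ac flip: exp_add) (simp add: algebra_simps)

lemma nn_integral_discounted_price:
  assumes "0 \<le> t"
  shows "(\<integral>\<^sup>+\<omega>. ennreal (exp (-r*t) * price \<omega> t) \<partial>M) = ennreal (p * exp ((\<mu> - r) * t))"
proof -
  have "(\<integral>\<^sup>+\<omega>. ennreal (exp (-r*t) * price \<omega> t) \<partial>M)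
      = (\<integral>\<^sup>+\<omega>. ennreal (p * exp ((\<mu> - r) * t)) * ennreal (expmart \<sigma> t \<omega>) \<partial>M)"
    using p_pos
    by (intro nn_integral_cong) (simp only: discounted_price_eq_expmart[OF assms], simp add: ennreal_mult')
  also have "\<dots> = ennreal (p * exp ((\<mu> - r) * t)) * (\<integral>\<^sup>+\<omega>. ennreal (expmart \<sigma> t \<omega>) \<partial>M)"
    using expmart_measurable[OF assms] by (intro nn_integral_cmult) simp
  finally show ?thesis using nn_integral_expmart[OF assms] by simp
qed

lemma nn_integral_integral_discounted_price:
  "(\<integral>\<^sup>+\<omega>. (\<integral>\<^sup>+t\<in>{0..}. ennreal (exp (-r*t) * price \<omega> t) \<partial>lborel) \<partial>M) = ennreal (p / (r - \<mu>))"
proof -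
  have "(\<integral>\<^sup>+\<omega>. (\<integral>\<^sup>+t. ennreal (exp (-r*t) * price \<omega> t) * indicator {0..} t \<partial>lborel) \<partial>M)
      = (\<integral>\<^sup>+t. (\<integral>\<^sup>+\<omega>. ennreal (exp (-r*t) * price \<omega> t) * indicator {0..} t \<partial>M) \<partial>lborel)"
    by (rule M_lborel.Fubini'[symmetric]) measurable
  also have "\<dots> = (\<integral>\<^sup>+t. ennreal p * (ennreal (exp ((\<mu> - r) * t)) * indicator {0..} t) \<partial>lborel)"
    using nn_integral_discounted_price p_pos
    by (intro nn_integral_cong) (simp add: ennreal_mult' nn_integral_multc split: split_indicator)
  also have "\<dots> = ennreal p * (\<integral>\<^sup>+t\<in>{0..}. ennreal (exp ((\<mu> - r) * t)) \<partial>lborel)"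
    by (rule nn_integral_cmult) measurable
  also have "\<dots> = ennreal (p / (r - \<mu>))"
    using nn_integral_exp_atLeast_0[of "\<mu> - r"] p_pos mu_less_r
    by (simp add: ennreal_mult'[symmetric] divide_simps) (simp add: algebra_simps)
  finally show ?thesis .
qed

lemma AE_set_integrable_discounted_price:
  "AE \<omega> in M. set_integrable lborel {0..} (\<lambda>t. exp (-r*t) * price \<omega> t)"
proof -
  have "AE \<omega> in M. (\<integral>\<^sup>+t\<in>{0..}. ennreal (exp (-r*t) * price \<omega> t) \<partial>lborel) \<noteq> \<infinity>"
    using nn_integral_integral_discounted_price by (intro nn_integral_PInf_AE) simp_all
  then show ?thesis
  proof (rule AE_mp, intro AE_I2 impI)
    fix \<omega> assume "\<omega> \<in> space M" "(\<integral>\<^sup>+t\<in>{0..}. ennreal (exp (-r*t) * price \<omega> t) \<partial>lborel) \<noteq> \<infinity>"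
    then show "set_integrable lborel {0..} (\<lambda>t. exp (-r*t) * price \<omega> t)"
      unfolding set_integrable_def using price_pos
      by (intro integrableI_nonneg) (auto simp: less_top nn_integral_set_ennreal indicator_mult_ennreal
          mult.commute less_imp_le)
  qed
qed

lemma disc_at_price_eq_stopped_expmart:
  assumes st: "stopping_time_inf M F \<tau>" and \<omega>: "\<omega> \<in> space M" and s: "0 \<le> s"
  shows "disc_at r (price \<omega>) (\<tau> \<omega> + ereal s) = p * exp ((\<mu> - r) * s) * stopped_expmart (\<mu> - r) \<sigma> \<tau> s \<omega>"
proof (cases "\<tau> \<omega>")
  case (real x)
  then have "0 \<le> x" using stopping_time_nonneg[OF st \<omega>] by simp
  then show ?thesis
    using discounted_price_eq_expmart[of "x + s" \<omega>] real s
    by (simp add: disc_at_def stopped_expmart_def algebra_simps flip: exp_add)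
qed (use stopping_time_nonneg[OF st \<omega>] in \<open>simp_all add: disc_at_def stopped_expmart_def\<close>)

lemma nn_integral_disc_at_price_shift:
  assumes st: "stopping_time_inf M F \<tau>" and s: "0 \<le> s"
  shows "(\<integral>\<^sup>+\<omega>. ennreal (disc_at r (price \<omega>) (\<tau> \<omega> + ereal s)) \<partial>M)
    = ennreal (exp ((\<mu> - r) * s)) * (\<integral>\<^sup>+\<omega>. ennreal (disc_at r (price \<omega>) (\<tau> \<omega>)) \<partial>M)"
proof -
  have eq: "ennreal (disc_at r (price \<omega>) (\<tau> \<omega> + ereal u))
      = ennreal (p * exp ((\<mu> - r) * u)) * ennreal (stopped_expmart (\<mu> - r) \<sigma> \<tau> u \<omega>)"
    if "\<omega> \<in> space M" "0 \<le> u" for \<omega> u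
    using disc_at_price_eq_stopped_expmart[OF st that] p_pos stopped_expmart_nonneg
    by (simp add: ennreal_mult')
  have "(\<integral>\<^sup>+\<omega>. ennreal (disc_at r (price \<omega>) (\<tau> \<omega> + ereal s)) \<partial>M)
      = ennreal (p * exp ((\<mu> - r) * s)) * (\<integral>\<^sup>+\<omega>. ennreal (stopped_expmart (\<mu> - r) \<sigma> \<tau> s \<omega>) \<partial>M)"
    using eq[OF _ s] stopped_expmart_measurable[OF st s]
    by (simp add: nn_integral_cong[of M _ "\<lambda>\<omega>. _ * ennreal (stopped_expmart (\<mu> - r) \<sigma> \<tau> s \<omega>)"]
        nn_integral_cmult)
  also have "\<dots> = ennreal (exp ((\<mu> - r) * s)) * (ennreal p * (\<integral>\<^sup>+\<omega>. ennreal (stopped_expmart (\<mu> - r) \<sigma> \<tau> 0 \<omega>) \<partial>M))"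
    using optional_stopping[OF st s, of "\<mu> - r" \<sigma>] mu_less_r p_pos by (simp add: ennreal_mult' mult_ac)
  also have "ennreal p * (\<integral>\<^sup>+\<omega>. ennreal (stopped_expmart (\<mu> - r) \<sigma> \<tau> 0 \<omega>) \<partial>M)
      = (\<integral>\<^sup>+\<omega>. ennreal (disc_at r (price \<omega>) (\<tau> \<omega>)) \<partial>M)"
    using eq[OF _ order_refl] stopped_expmart_measurable[OF st order_refl]
    by (simp add: nn_integral_cong[of M _ "\<lambda>\<omega>. _ * ennreal (stopped_expmart (\<mu> - r) \<sigma> \<tau> 0 \<omega>)"]
        nn_integral_cmult)
  finally show ?thesis .
qed

lemma ennreal_run_int_window:
  assumes \<omega>: "\<omega> \<in> space M" and e: "0 \<le> e"
  shows "ennreal (run_int r 0 (price \<omega>) e (e + ereal \<delta>))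
    = (\<integral>\<^sup>+t. ennreal (exp (-r*t) * price \<omega> t) * indicator (ereal_Ico e (e + ereal \<delta>)) t \<partial>lborel)"
proof (cases e)
  case (real x)
  have "set_integrable lborel {x..x+\<delta>} (\<lambda>t. exp (-r*t) * price \<omega> t)"
    using continuous_on_price[OF \<omega>]
    by (intro borel_integrable_atLeastAtMost' continuous_intros) (auto intro: continuous_on_subset)
  then have "integrable lborel (\<lambda>t. indicator {x..<x+\<delta>} t *\<^sub>R (exp (-r*t) * price \<omega> t))"
    unfolding set_integrable_def[symmetric] by (rule set_integrable_subset) auto
  then have "ennreal (run_int r 0 (price \<omega>) e (e + ereal \<delta>))
      = (\<integral>\<^sup>+t. ennreal (indicator {x..<x+\<delta>} t *\<^sub>R (exp (-r*t) * price \<omega> t)) \<partial>lborel)"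
    using price_pos[of \<omega>]
    by (subst nn_integral_eq_integral)
      (auto simp: run_int_ereal_Ico real set_lebesgue_integral_def less_imp_le)
  then show ?thesis
    by (simp add: real mult.commute indicator_mult_ennreal)
qed (use e in \<open>simp_all add: run_int_infinity ereal_Ico_infinity\<close>)

lemma ennreal_run_int_window_shift:
  assumes \<omega>: "\<omega> \<in> space M" and e: "0 \<le> e"
  shows "ennreal (run_int r 0 (price \<omega>) e (e + ereal \<delta>))
    = (\<integral>\<^sup>+s. ennreal (disc_at r (price \<omega>) (e + ereal s)) * indicator {0..<\<delta>} s \<partial>lborel)"
proof (cases e)
  case (real x)
  have [measurable]: "price \<omega> \<in> borel_measurable borel"
    using continuous_on_price[OF \<omega>] by (rule borel_measurable_continuous_onI)
  have m: "(\<lambda>t. ennreal (exp (-r*t) * price \<omega> t) * indicator {x..<x+\<delta>} t) \<in> borel_measurable borel"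
    by measurable
  have "(\<integral>\<^sup>+t. ennreal (exp (-r*t) * price \<omega> t) * indicator {x..<x+\<delta>} t \<partial>lborel)
      = (\<integral>\<^sup>+s. ennreal (exp (-r*(x + s)) * price \<omega> (x + s)) * indicator {x..<x+\<delta>} (x + s) \<partial>lborel)"
    using nn_integral_real_affine[OF m, of 1 x] by simp
  then show ?thesis
    using ennreal_run_int_window[OF assms] real by (simp add: disc_at_def indicator_def)
qed (use e in \<open>simp_all add: run_int_infinity disc_at_def\<close>)

lemma nn_integral_window_le:
  assumes st: "stopping_time_inf M F \<tau>"
  shows "(\<integral>\<^sup>+\<omega>. ennreal (run_int r 0 (price \<omega>) (\<tau> \<omega>) (\<tau> \<omega> + ereal \<delta>)) \<partial>M) \<le> ennreal (p / (r - \<mu>))"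
proof -
  have "(\<integral>\<^sup>+\<omega>. ennreal (run_int r 0 (price \<omega>) (\<tau> \<omega>) (\<tau> \<omega> + ereal \<delta>)) \<partial>M)
      \<le> (\<integral>\<^sup>+\<omega>. (\<integral>\<^sup>+t\<in>{0..}. ennreal (exp (-r*t) * price \<omega> t) \<partial>lborel) \<partial>M)"
  proof (rule nn_integral_mono)
    fix \<omega> assume \<omega>: "\<omega> \<in> space M"
    have "indicator (ereal_Ico (\<tau> \<omega>) (\<tau> \<omega> + ereal \<delta>)) t \<le> (indicator {0..} t :: ennreal)" for t
      using ereal_Ico_subset[OF stopping_time_nonneg[OF st \<omega>]] by (auto split: split_indicator)
    then show "ennreal (run_int r 0 (price \<omega>) (\<tau> \<omega>) (\<tau> \<omega> + ereal \<delta>))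
        \<le> (\<integral>\<^sup>+t\<in>{0..}. ennreal (exp (-r*t) * price \<omega> t) \<partial>lborel)"
      unfolding ennreal_run_int_window[OF \<omega> stopping_time_nonneg[OF st \<omega>]]
      by (intro nn_integral_mono mult_left_mono) simp_all
  qed
  then show ?thesis unfolding nn_integral_integral_discounted_price .
qed

lemma nn_integral_window:
  assumes st: "stopping_time_inf M F \<tau>"
  shows "(\<integral>\<^sup>+\<omega>. ennreal (run_int r 0 (price \<omega>) (\<tau> \<omega>) (\<tau> \<omega> + ereal \<delta>)) \<partial>M)
    = ennreal (k1 \<mu> r \<delta>) * (\<integral>\<^sup>+\<omega>. ennreal (disc_at r (price \<omega>) (\<tau> \<omega>)) \<partial>M)"
proof -
  let ?I = "\<integral>\<^sup>+\<omega>. ennreal (disc_at r (price \<omega>) (\<tau> \<omega>)) \<partial>M"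
  have [measurable]: "\<tau> \<in> borel_measurable M" using st by measurable
  have "(\<lambda>x. disc_at r (price (fst x)) (\<tau> (fst x) + ereal (snd x))) \<in> borel_measurable (M \<Otimes>\<^sub>M lborel)"
    by (rule disc_at_measurable) measurable
  then have [measurable]: "(\<lambda>(\<omega>, s). ennreal (disc_at r (price \<omega>) (\<tau> \<omega> + ereal s)) * indicator {0..<\<delta>} s)
      \<in> borel_measurable (M \<Otimes>\<^sub>M lborel)"
    by (simp add: case_prod_beta')
  have "(\<integral>\<^sup>+\<omega>. ennreal (run_int r 0 (price \<omega>) (\<tau> \<omega>) (\<tau> \<omega> + ereal \<delta>)) \<partial>M)
      = (\<integral>\<^sup>+\<omega>. \<integral>\<^sup>+s. ennreal (disc_at r (price \<omega>) (\<tau> \<omega> + ereal s)) * indicator {0..<\<delta>} s \<partial>lborel \<partial>M)"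
    using stopping_time_nonneg[OF st] by (intro nn_integral_cong ennreal_run_int_window_shift) auto
  also have "\<dots> = (\<integral>\<^sup>+s. \<integral>\<^sup>+\<omega>. ennreal (disc_at r (price \<omega>) (\<tau> \<omega> + ereal s)) * indicator {0..<\<delta>} s \<partial>M \<partial>lborel)"
    by (rule M_lborel.Fubini'[symmetric]) measurable
  also have "\<dots> = (\<integral>\<^sup>+s. ennreal (exp ((\<mu> - r) * s)) * indicator {0..<\<delta>} s * ?I \<partial>lborel)"
    using nn_integral_disc_at_price_shift[OF st]
    by (intro nn_integral_cong) (simp add: nn_integral_multc split: split_indicator)
  also have "\<dots> = ennreal (k1 \<mu> r \<delta>) * ?I"
    using nn_integral_exp_Ico_k1[of \<mu> r \<delta>] mu_less_r delta_pos by (simp add: nn_integral_multc)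
  finally show ?thesis .
qed

lemma window_integrals:
  assumes st: "stopping_time_inf M F \<tau>"
  shows "integrable M (\<lambda>\<omega>. run_int r 0 (price \<omega>) (\<tau> \<omega>) (\<tau> \<omega> + ereal \<delta>))"
    and "integrable M (\<lambda>\<omega>. disc_at r (price \<omega>) (\<tau> \<omega>))"
    and "(\<integral>\<omega>. run_int r 0 (price \<omega>) (\<tau> \<omega>) (\<tau> \<omega> + ereal \<delta>) \<partial>M)
      = k1 \<mu> r \<delta> * (\<integral>\<omega>. disc_at r (price \<omega>) (\<tau> \<omega>) \<partial>M)"
proof -
  let ?Y = "\<lambda>\<omega>. run_int r 0 (price \<omega>) (\<tau> \<omega>) (\<tau> \<omega> + ereal \<delta>)"
  let ?Z = "\<lambda>\<omega>. disc_at r (price \<omega>) (\<tau> \<omega>)"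
  have [measurable]: "\<tau> \<in> borel_measurable M" using st by measurable
  have Ym: "?Y \<in> borel_measurable M" by (rule run_int_measurable) measurable
  have Zm: "?Z \<in> borel_measurable M" by (rule disc_at_measurable) measurable
  have Yn: "0 \<le> ?Y \<omega>" for \<omega>
    unfolding run_int_ereal_Ico set_lebesgue_integral_def using price_pos[of \<omega>]
    by (intro Bochner_Integration.integral_nonneg) (simp add: indicator_def less_imp_le)
  have Zn: "0 \<le> ?Z \<omega>" for \<omega>
    using price_pos[of \<omega>] by (cases "\<tau> \<omega>") (simp_all add: disc_at_def less_imp_le)
  have k1: "0 < k1 \<mu> r \<delta>" using k1_pos mu_less_r delta_pos by blast
  have finY: "(\<integral>\<^sup>+\<omega>. ennreal (?Y \<omega>) \<partial>M) < \<infinity>"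
    using nn_integral_window_le[OF st] by (rule le_less_trans) simp
  show iY: "integrable M ?Y" using Ym Yn finY by (intro integrableI_nonneg) auto
  have "(\<integral>\<^sup>+\<omega>. ennreal (?Z \<omega>) \<partial>M) < \<infinity>"
    using finY k1 unfolding nn_integral_window[OF st] by (auto simp: ennreal_mult_less_top top_unique)
  then show iZ: "integrable M ?Z" using Zm Zn by (intro integrableI_nonneg) auto
  have "ennreal (integral\<^sup>L M ?Y) = ennreal (k1 \<mu> r \<delta> * integral\<^sup>L M ?Z)"
    using nn_integral_window[OF st] k1 Yn Zn
    by (simp add: nn_integral_eq_integral[OF iY] nn_integral_eq_integral[OF iZ] ennreal_mult')
  then show "integral\<^sup>L M ?Y = k1 \<mu> r \<delta> * integral\<^sup>L M ?Z"
    using k1 Yn Zn by (simp add: ennreal_inj)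
qed

definition window_excess :: "('a \<Rightarrow> ereal) \<Rightarrow> 'a \<Rightarrow> real" where
  "window_excess \<tau> \<omega> = run_int r 0 (price \<omega>) (\<tau> \<omega>) (\<tau> \<omega> + ereal \<delta>) - k1 \<mu> r \<delta> * disc_at r (price \<omega>) (\<tau> \<omega>)"

lemma window_excess_centered:
  assumes "stopping_time_inf M F \<tau>"
  shows "integrable M (window_excess \<tau>)" "integral\<^sup>L M (window_excess \<tau>) = 0"
  using window_integrals[OF assms] unfolding window_excess_def[abs_def] by simp_all

lemma reward_J_eq_price:
  assumes "0 \<le> \<tau>I \<omega>"
  shows "reward_J \<mu> \<sigma> r C KI KO \<delta> p B \<tau>I \<tau>O \<omega>
    = run_int r C (price \<omega>) (\<tau>I \<omega> + ereal \<delta>) (\<tau>O \<omega> + ereal \<delta>)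
      - disc_at r (\<lambda>_. KI) (\<tau>I \<omega> + ereal \<delta>) - disc_at r (\<lambda>_. KO) (\<tau>O \<omega> + ereal \<delta>)"
proof -
  have "0 \<le> \<tau>I \<omega> + ereal \<delta>" using assms delta_pos by simp
  then have "run_int r C (\<lambda>t. gbm \<mu> \<sigma> p B t \<omega>) (\<tau>I \<omega> + ereal \<delta>) (\<tau>O \<omega> + ereal \<delta>)
      = run_int r C (price \<omega>) (\<tau>I \<omega> + ereal \<delta>) (\<tau>O \<omega> + ereal \<delta>)"
    by (rule run_int_cong_nonneg) (rule gbm_eq_price)
  then show ?thesis unfolding reward_J_def by (rule arg_cong[where f = "\<lambda>x. x - _ - _"])
qed

lemma reward_Jt_eq_price:
  assumes "0 \<le> \<tau>I \<omega>" "0 \<le> \<tau>O \<omega>"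
  shows "reward_Jt \<mu> \<sigma> r C KI KO \<delta> p B \<tau>I \<tau>O \<omega>
    = run_int r C (price \<omega>) (\<tau>I \<omega>) (\<tau>O \<omega>)
      - disc_at r (\<lambda>t. k1 \<mu> r \<delta> * price \<omega> t + k0 r C KI \<delta>) (\<tau>I \<omega>)
      - disc_at r (\<lambda>t. l1 \<mu> r \<delta> * price \<omega> t + l0 r C KO \<delta>) (\<tau>O \<omega>)"
proof -
  have "run_int r C (\<lambda>t. gbm \<mu> \<sigma> p B t \<omega>) (\<tau>I \<omega>) (\<tau>O \<omega>) = run_int r C (price \<omega>) (\<tau>I \<omega>) (\<tau>O \<omega>)"
    using assms(1) by (rule run_int_cong_nonneg) (rule gbm_eq_price)
  moreover have "disc_at r (\<lambda>t. k * gbm \<mu> \<sigma> p B t \<omega> + c) e = disc_at r (\<lambda>t. k * price \<omega> t + c) e"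
    if "0 \<le> e" for k c e
    using that by (rule disc_at_cong_nonneg) (simp add: gbm_eq_price)
  ultimately show ?thesis
    unfolding reward_Jt_def using assms by simp
qed

lemma reward_J_measurable:
  assumes stI: "stopping_time_inf M F \<tau>I" and stO: "stopping_time_inf M F \<tau>O"
  shows "reward_J \<mu> \<sigma> r C KI KO \<delta> p B \<tau>I \<tau>O \<in> borel_measurable M"
proof -
  have [measurable]: "\<tau>I \<in> borel_measurable M" "\<tau>O \<in> borel_measurable M"
    using stI stO by measurable
  have "(\<lambda>\<omega>. run_int r C (price \<omega>) (\<tau>I \<omega> + ereal \<delta>) (\<tau>O \<omega> + ereal \<delta>)
      - disc_at r (\<lambda>_. KI) (\<tau>I \<omega> + ereal \<delta>) - disc_at r (\<lambda>_. KO) (\<tau>O \<omega> + ereal \<delta>))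
      \<in> borel_measurable M"
    by (intro borel_measurable_diff run_int_measurable disc_at_measurable) measurable
  then show ?thesis
    by (rule measurable_cong[THEN iffD1, rotated]) (simp add: reward_J_eq_price stopping_time_nonneg[OF stI])
qed

lemma reward_Jt_measurable:
  assumes stI: "stopping_time_inf M F \<tau>I" and stO: "stopping_time_inf M F \<tau>O"
  shows "reward_Jt \<mu> \<sigma> r C KI KO \<delta> p B \<tau>I \<tau>O \<in> borel_measurable M"
proof -
  have [measurable]: "\<tau>I \<in> borel_measurable M" "\<tau>O \<in> borel_measurable M"
    using stI stO by measurable
  have "(\<lambda>\<omega>. run_int r C (price \<omega>) (\<tau>I \<omega>) (\<tau>O \<omega>)
      - disc_at r (\<lambda>t. k1 \<mu> r \<delta> * price \<omega> t + k0 r C KI \<delta>) (\<tau>I \<omega>)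
      - disc_at r (\<lambda>t. l1 \<mu> r \<delta> * price \<omega> t + l0 r C KO \<delta>) (\<tau>O \<omega>)) \<in> borel_measurable M"
    by (intro borel_measurable_diff run_int_measurable disc_at_measurable) measurable
  then show ?thesis
    by (rule measurable_cong[THEN iffD1, rotated])
      (simp add: reward_Jt_eq_price stopping_time_nonneg[OF stI] stopping_time_nonneg[OF stO])
qed

lemma integral_reward_J_eq_reward_Jt:
  assumes "admissible M F \<tau>I \<tau>O"
  shows "integral\<^sup>L M (reward_J \<mu> \<sigma> r C KI KO \<delta> p B \<tau>I \<tau>O)
    = integral\<^sup>L M (reward_Jt \<mu> \<sigma> r C KI KO \<delta> p B \<tau>I \<tau>O)"
proof -
  from assms have stI: "stopping_time_inf M F \<tau>I" and stO: "stopping_time_inf M F \<tau>O"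
    and le: "\<And>\<omega>. \<omega> \<in> space M \<Longrightarrow> \<tau>I \<omega> \<le> \<tau>O \<omega>"
    unfolding admissible_def by auto
  have "AE \<omega> in M. reward_J \<mu> \<sigma> r C KI KO \<delta> p B \<tau>I \<tau>O \<omega>
      = reward_Jt \<mu> \<sigma> r C KI KO \<delta> p B \<tau>I \<tau>O \<omega> + (window_excess \<tau>O \<omega> - window_excess \<tau>I \<omega>)"
    using AE_set_integrable_discounted_price
  proof (rule AE_mp, intro AE_I2 impI)
    fix \<omega> assume \<omega>: "\<omega> \<in> space M" and int: "set_integrable lborel {0..} (\<lambda>t. exp (-r*t) * price \<omega> t)"
    note nn = stopping_time_nonneg[OF stI \<omega>] stopping_time_nonneg[OF stO \<omega>]
    show "reward_J \<mu> \<sigma> r C KI KO \<delta> p B \<tau>I \<tau>O \<omega>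
      = reward_Jt \<mu> \<sigma> r C KI KO \<delta> p B \<tau>I \<tau>O \<omega> + (window_excess \<tau>O \<omega> - window_excess \<tau>I \<omega>)"
      using delayed_reward_decomposition[where \<mu> = \<mu> and C = C and KI = KI and KO = KO,
          OF continuous_on_subset[OF continuous_on_price[OF \<omega>] subset_UNIV] int r_pos
          less_imp_le[OF delta_pos] nn(1) le[OF \<omega>]]
      unfolding reward_J_eq_price[where \<tau>I = \<tau>I, OF nn(1)]
        reward_Jt_eq_price[where \<tau>I = \<tau>I and \<tau>O = \<tau>O, OF nn] window_excess_def
      by (simp only: add_diff_eq)
  qed
  then show ?thesis
    using window_excess_centered[OF stI] window_excess_centered[OF stO]
    by (intro integral_eq_if_AE_eq_add_centered[OF reward_J_measurable[OF stI stO]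
          reward_Jt_measurable[OF stI stO]]) simp_all
qed

end

lemma integral_reward_J_eq_integral_reward_Jt:
  assumes "prob_space M" "usual_filtration M F" "std_brownian_motion M F B"
    and "0 < r" "\<mu> < r" "0 < p" "0 \<le> \<delta>" "admissible M F \<tau>I \<tau>O"
  shows "integral\<^sup>L M (reward_J \<mu> \<sigma> r C KI KO \<delta> p B \<tau>I \<tau>O)
    = integral\<^sup>L M (reward_Jt \<mu> \<sigma> r C KI KO \<delta> p B \<tau>I \<tau>O)"
proof (cases "\<delta> = 0")
  case True
  then have "reward_J \<mu> \<sigma> r C KI KO \<delta> p B \<tau>I \<tau>O = reward_Jt \<mu> \<sigma> r C KI KO \<delta> p B \<tau>I \<tau>O"
    by (simp add: fun_eq_iff reward_J_def reward_Jt_def k1_def k0_def l1_def l0_def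
        zero_ereal_def[symmetric])
  then show ?thesis by simp
next
  case False
  interpret discounted_gbm M F B \<mu> \<sigma> r p \<delta>
    using assms False
    by (intro discounted_gbm.intro brownian_filtration.intro brownian_filtration_axioms.intro
        discounted_gbm_axioms.intro) auto
  show ?thesis using assms(8) by (rule integral_reward_J_eq_reward_Jt)
qed

theorem theorem5p2:
  fixes M :: "'a measure" and F :: "real \<Rightarrow> 'a measure" and B :: "real \<Rightarrow> 'a \<Rightarrow> real"
    and \<mu> \<sigma> r C KI KO \<delta> p :: real
  assumes "prob_space M"
    and "usual_filtration M F"
    and "std_brownian_motion M F B"
    and "\<sigma> > 0" and "r > 0" and "\<delta> \<ge> 0"
    and "r > \<mu>"
    and "p > 0"
  shows "J_val M F B \<mu> \<sigma> r C KI KO \<delta> p = Jt_val M F B \<mu> \<sigma> r C KI KO \<delta> p \<and>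
    (\<forall>\<tau>I \<tau>O. admissible M F \<tau>I \<tau>O \<longrightarrow>
       ereal (integral\<^sup>L M (reward_Jt \<mu> \<sigma> r C KI KO \<delta> p B \<tau>I \<tau>O))
         = Jt_val M F B \<mu> \<sigma> r C KI KO \<delta> p \<longrightarrow>
       ereal (integral\<^sup>L M (reward_J \<mu> \<sigma> r C KI KO \<delta> p B \<tau>I \<tau>O))
         = J_val M F B \<mu> \<sigma> r C KI KO \<delta> p)"
proof -
  have eq: "integral\<^sup>L M (reward_J \<mu> \<sigma> r C KI KO \<delta> p B \<tau>I \<tau>O)
      = integral\<^sup>L M (reward_Jt \<mu> \<sigma> r C KI KO \<delta> p B \<tau>I \<tau>O)"
    if "admissible M F \<tau>I \<tau>O" for \<tau>I \<tau>O
    using assms that by (intro integral_reward_J_eq_integral_reward_Jt) auto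
  then have "J_val M F B \<mu> \<sigma> r C KI KO \<delta> p = Jt_val M F B \<mu> \<sigma> r C KI KO \<delta> p"
    unfolding J_val_def Jt_val_def by (intro SUP_cong) auto
  with eq show ?thesis by simp
qed

end
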